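(* Let $u_0(x)=\tanh(x/\sqrt2)$. For any $c\in\mathbb{R}$ and any real $u\in H^2(\mathbb{R})$, $$\langle K_+(c)u,u\rangle_{L^2}=\|w_x\|^2_{L^2}+(3-c)\|w\|^2_{L^2},\qquad w=u_x+\sqrt2\,u_0u\in H^1(\mathbb{R}).$$
   Context: Here $\mathcal{E}=0$ and $K_+(c)=M_+-cL_+$ with $L_+u=-u''+(3u_0^2-1)u$ and $M_+u=u''''-5(u_0^2u')'+(-5u_0^4+15u_0^2-4)u$; its quadratic form on $H^2(\mathbb{R})$ is $\langle K_+(c)u,u\rangle_{L^2}=\int[u_{xx}^2+5u_0^2u_x^2+(-5u_0^4+15u_0^2-4)u^2]\,dx-c\int[u_x^2+(3u_0^2-1)u^2]\,dx$. *)

theory Defs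
  imports "HOL-Analysis.Analysis"
begin

definition u0 :: "real \<Rightarrow> real" where
  "u0 x = tanh (x / sqrt 2)"

definition L2 :: "(real \<Rightarrow> real) \<Rightarrow> bool" where
  "L2 f \<longleftrightarrow> f \<in> borel_measurable lborel \<and> integrable lborel (\<lambda>x. (f x)^2)"

definition test_fun :: "(real \<Rightarrow> real) \<Rightarrow> bool" where
  "test_fun \<phi> \<longleftrightarrow> (\<forall>k x. ((deriv ^^ k) \<phi>) differentiable (at x))
                 \<and> (\<exists>R. \<forall>x. \<bar>x\<bar> > R \<longrightarrow> \<phi> x = 0)"

definition weak_deriv :: "(real \<Rightarrow> real) \<Rightarrow> (real \<Rightarrow> real) \<Rightarrow> bool" where
  "weak_deriv u v \<longleftrightarrow>
     (\<forall>a b. set_integrable lborel {a..b} u \<and> set_integrable lborel {a..b} v)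
   \<and> (\<forall>\<phi>. test_fun \<phi> \<longrightarrow>
        (\<integral>x. u x * deriv \<phi> x \<partial>lborel) = - (\<integral>x. v x * \<phi> x \<partial>lborel))"

definition H1 :: "(real \<Rightarrow> real) \<Rightarrow> (real \<Rightarrow> real) \<Rightarrow> bool" where
  "H1 u u1 \<longleftrightarrow> L2 u \<and> L2 u1 \<and> weak_deriv u u1"

definition H2 :: "(real \<Rightarrow> real) \<Rightarrow> (real \<Rightarrow> real) \<Rightarrow> (real \<Rightarrow> real) \<Rightarrow> bool" where
  "H2 u u1 u2 \<longleftrightarrow> L2 u \<and> L2 u1 \<and> L2 u2 \<and> weak_deriv u u1 \<and> weak_deriv u1 u2"

text \<open>Quadratic form <K_+(c)u,u> for u in H^2 with u_x = u1, u_xx = u2.\<close>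
definition Kplus_form :: "real \<Rightarrow> (real \<Rightarrow> real) \<Rightarrow> (real \<Rightarrow> real) \<Rightarrow> (real \<Rightarrow> real) \<Rightarrow> real" where
  "Kplus_form c u u1 u2 =
     (\<integral>x. (u2 x)^2 + 5 * (u0 x)^2 * (u1 x)^2
            + (- 5 * (u0 x)^4 + 15 * (u0 x)^2 - 4) * (u x)^2 \<partial>lborel)
   - c * (\<integral>x. (u1 x)^2 + (3 * (u0 x)^2 - 1) * (u x)^2 \<partial>lborel)"

end

theory Submission
  imports Defs "HOL-Computational_Algebra.Polynomial"
begin

text \<open>
  Write u' for u_x and note u0' = (1 - u0^2) / sqrt 2. Pointwise, |w|^2 - (u'^2 + (3 u0^2 - 1) u^2)
  is the derivative of sqrt 2 u0 u^2, and |w_x|^2 + 3 |w|^2 minus the c-free integrand of the form is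
  the derivative of sqrt 2 u0 u'^2 + 2 (1 - u0^2) u u' + sqrt 2 u0 (5 - 2 u0^2) u^2. These two
  functions are integrable with integrable derivatives, so the derivatives integrate to zero; the
  identity is the second relation minus c times the first.
  For weak derivatives the computation is carried out on absolutely continuous representatives of u
  and u', which exist by the du Bois-Reymond lemma and obey the product rule.
\<close>

section \<open>Smooth functions\<close>

definition smooth_upto :: "nat \<Rightarrow> (real \<Rightarrow> real) \<Rightarrow> bool" where
  "smooth_upto n f \<longleftrightarrow> (\<forall>k\<le>n. \<forall>x. (deriv ^^ k) f differentiable (at x))"

definition smooth :: "(real \<Rightarrow> real) \<Rightarrow> bool" where
  "smooth f \<longleftrightarrow> (\<forall>k x. (deriv ^^ k) f differentiable (at x))"

lemma smooth_iff_smooth_upto: "smooth f \<longleftrightarrow> (\<forall>n. smooth_upto n f)"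
  unfolding smooth_def smooth_upto_def by auto

lemma smooth_upto_0I: "(\<And>x. (f has_real_derivative f' x) (at x)) \<Longrightarrow> smooth_upto 0 f"
  unfolding smooth_upto_def real_differentiable_def by auto

lemma smooth_upto_SucI:
  assumes f': "\<And>x. (f has_real_derivative f' x) (at x)" and "smooth_upto n f'"
  shows "smooth_upto (Suc n) f"
  unfolding smooth_upto_def
proof (intro allI impI)
  fix k x assume "k \<le> Suc n"
  have "deriv f = f'" using f' DERIV_imp_deriv by (intro ext) blast
  then have "(deriv ^^ Suc j) f = (deriv ^^ j) f'" for j
    by (simp add: funpow_Suc_right del: funpow.simps)
  with \<open>k \<le> Suc n\<close> show "(deriv ^^ k) f differentiable (at x)"
    using assms smooth_upto_0I[OF f'] unfolding smooth_upto_def by (cases k) auto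
qed

lemma smooth_upto_SucD:
  assumes "smooth_upto (Suc n) f"
  shows "(f has_real_derivative deriv f x) (at x)" "smooth_upto n (deriv f)"
proof -
  have "(deriv ^^ 0) f differentiable at x" using assms unfolding smooth_upto_def by blast
  then show "(f has_real_derivative deriv f x) (at x)"
    using DERIV_deriv_iff_real_differentiable by auto
  have "(deriv ^^ k) (deriv f) = (deriv ^^ Suc k) f" for k
    by (simp add: funpow_Suc_right del: funpow.simps)
  then show "smooth_upto n (deriv f)" using assms unfolding smooth_upto_def by auto
qed

lemma smooth_has_real_derivative: "smooth f \<Longrightarrow> (f has_real_derivative deriv f x) (at x)"
  unfolding smooth_iff_smooth_upto using smooth_upto_SucD(1) by blast

lemma smooth_deriv: "smooth f \<Longrightarrow> smooth (deriv f)"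
  unfolding smooth_iff_smooth_upto using smooth_upto_SucD(2) by blast

lemma smoothI:
  assumes "\<And>x. (f has_real_derivative f' x) (at x)" and "smooth f'"
  shows "smooth f"
  unfolding smooth_iff_smooth_upto
proof
  fix n show "smooth_upto n f"
    using assms by (cases n) (auto simp: smooth_iff_smooth_upto intro: smooth_upto_0I smooth_upto_SucI)
qed

lemma smooth_isCont: "smooth f \<Longrightarrow> isCont f x"
  using smooth_has_real_derivative DERIV_isCont by blast

lemma continuous_on_smooth: "smooth f \<Longrightarrow> continuous_on S f"
  using smooth_isCont continuous_at_imp_continuous_on by blast

lemma smooth_measurable: "smooth f \<Longrightarrow> f \<in> borel_measurable lborel"
  using continuous_on_smooth[of f UNIV] borel_measurable_continuous_onI by simp

lemma smooth_upto_add: "smooth_upto n f \<Longrightarrow> smooth_upto n g \<Longrightarrow> smooth_upto n (\<lambda>x. f x + g x)"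
proof (induction n arbitrary: f g)
  case 0 then show ?case by (auto simp: smooth_upto_def)
next
  case (Suc n)
  show ?case
  proof (rule smooth_upto_SucI)
    show "((\<lambda>x. f x + g x) has_real_derivative deriv f x + deriv g x) (at x)" for x
      using smooth_upto_SucD(1)[OF Suc.prems(1)] smooth_upto_SucD(1)[OF Suc.prems(2)]
      by (auto intro!: derivative_eq_intros)
    show "smooth_upto n (\<lambda>x. deriv f x + deriv g x)"
      using Suc.IH smooth_upto_SucD(2) Suc.prems by blast
  qed
qed

lemma smooth_upto_cmult: "smooth_upto n f \<Longrightarrow> smooth_upto n (\<lambda>x. c * f x)"
proof (induction n arbitrary: f)
  case 0 then show ?case by (auto simp: smooth_upto_def)
next
  case (Suc n)
  show ?case
  proof (rule smooth_upto_SucI)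
    show "((\<lambda>x. c * f x) has_real_derivative c * deriv f x) (at x)" for x
      using smooth_upto_SucD(1)[OF Suc.prems] by (auto intro!: derivative_eq_intros)
    show "smooth_upto n (\<lambda>x. c * deriv f x)"
      using Suc.IH smooth_upto_SucD(2) Suc.prems by blast
  qed
qed

lemma smooth_add: "smooth f \<Longrightarrow> smooth g \<Longrightarrow> smooth (\<lambda>x. f x + g x)"
  by (simp add: smooth_iff_smooth_upto smooth_upto_add)

lemma smooth_cmult: "smooth f \<Longrightarrow> smooth (\<lambda>x. c * f x)"
  by (simp add: smooth_iff_smooth_upto smooth_upto_cmult)

lemma smooth_mult: "smooth f \<Longrightarrow> smooth g \<Longrightarrow> smooth (\<lambda>x. f x * g x)"
  unfolding smooth_iff_smooth_upto[of "\<lambda>x. f x * g x"]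
proof
  fix n assume "smooth f" "smooth g"
  then show "smooth_upto n (\<lambda>x. f x * g x)"
  proof (induction n arbitrary: f g)
    case 0 show ?case
      using smooth_has_real_derivative[OF 0(1)] smooth_has_real_derivative[OF 0(2)]
      by (intro smooth_upto_0I) (auto intro!: derivative_eq_intros)
  next
    case (Suc n)
    show ?case
    proof (rule smooth_upto_SucI)
      show "((\<lambda>x. f x * g x) has_real_derivative deriv f x * g x + f x * deriv g x) (at x)" for x
        using smooth_has_real_derivative[OF Suc.prems(1)] smooth_has_real_derivative[OF Suc.prems(2)]
        by (auto intro!: derivative_eq_intros)
      show "smooth_upto n (\<lambda>x. deriv f x * g x + f x * deriv g x)"
        using Suc.IH smooth_deriv Suc.prems by (intro smooth_upto_add) blast+
    qed
  qed
qed

lemma smooth_compose_affine: "smooth f \<Longrightarrow> smooth (\<lambda>x. f (a * x + b))"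
  unfolding smooth_iff_smooth_upto[of "\<lambda>x. f (a * x + b)"]
proof
  have chain: "((\<lambda>x. f (a * x + b)) has_real_derivative a * deriv f (a * x + b)) (at x)"
    if "smooth f" for f x
  proof -
    have "((\<lambda>x. a * x + b) has_real_derivative a) (at x)" by (auto intro!: derivative_eq_intros)
    from DERIV_chain2[OF smooth_has_real_derivative[OF that] this] show ?thesis
      by (simp add: mult.commute)
  qed
  fix n assume "smooth f"
  then show "smooth_upto n (\<lambda>x. f (a * x + b))"
  proof (induction n arbitrary: f)
    case 0 show ?case by (rule smooth_upto_0I[OF chain[OF 0]])
  next
    case (Suc n)
    show ?case
      using Suc.IH[OF smooth_deriv[OF Suc.prems]]
      by (intro smooth_upto_SucI[OF chain[OF Suc.prems]] smooth_upto_cmult)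
  qed
qed

lemma smooth_divide:
  "smooth f \<Longrightarrow> smooth g \<Longrightarrow> (\<And>x. g x \<noteq> 0) \<Longrightarrow> smooth (\<lambda>x. f x / g x)"
  unfolding smooth_iff_smooth_upto[of "\<lambda>x. f x / g x"]
proof
  have quot: "((\<lambda>x. f x / g x) has_real_derivative
        (deriv f x * g x - f x * deriv g x) / (g x * g x)) (at x)"
    if "smooth f" "smooth g" "\<And>x. g x \<noteq> 0" for f g x
    using that by (intro DERIV_divide smooth_has_real_derivative)
  fix n assume "smooth f" "smooth g" "\<And>x. g x \<noteq> 0"
  then show "smooth_upto n (\<lambda>x. f x / g x)"
  proof (induction n arbitrary: f g)
    case 0 show ?case by (rule smooth_upto_0I[OF quot[OF 0]])
  next
    case (Suc n)
    have "smooth (\<lambda>x. deriv f x * g x - f x * deriv g x)"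
      using smooth_add[OF smooth_mult[OF smooth_deriv[OF Suc.prems(1)] Suc.prems(2)]
          smooth_cmult[OF smooth_mult[OF Suc.prems(1) smooth_deriv[OF Suc.prems(2)]], of "- 1"]]
      by simp
    moreover have "smooth (\<lambda>x. g x * g x)" using Suc.prems by (simp add: smooth_mult)
    ultimately show ?case
      using Suc.prems Suc.IH by (intro smooth_upto_SucI[OF quot[OF Suc.prems]]) simp
  qed
qed

section \<open>A smooth step function\<close>

text \<open>The polynomial factor makes the family closed under differentiation.\<close>

definition exp_recip_poly :: "real poly \<Rightarrow> real \<Rightarrow> real" where
  "exp_recip_poly P x = (if 0 < x then poly P (1 / x) * exp (- 1 / x) else 0)"

lemma tendsto_poly_times_exp_neg_at_top:
  fixes P :: "real poly" shows "((\<lambda>t. poly P t * exp (- t)) \<longlongrightarrow> 0) at_top"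
proof -
  have "((\<lambda>t. \<Sum>i\<le>degree P. coeff P i * (t ^ i / exp t)) \<longlongrightarrow> (\<Sum>i\<le>degree P. coeff P i * 0)) at_top"
    by (intro tendsto_sum tendsto_mult tendsto_const tendsto_power_div_exp_0)
  moreover have "(\<Sum>i\<le>degree P. coeff P i * (t ^ i / exp t)) = poly P t * exp (- t)" for t
    by (simp add: poly_altdef exp_minus sum_distrib_right divide_inverse mult.assoc)
  ultimately show ?thesis by simp
qed

lemma exp_recip_poly_over_tendsto_0: "((\<lambda>h. exp_recip_poly P h / h) \<longlongrightarrow> 0) (at 0)"
proof (rule filterlim_split_at)
  have "eventually (\<lambda>h. 0 = exp_recip_poly P h / h) (at_left (0::real))"
    by (auto simp: eventually_at_filter exp_recip_poly_def)
  then show "((\<lambda>h. exp_recip_poly P h / h) \<longlongrightarrow> 0) (at_left 0)"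
    by (rule tendsto_cong[THEN iffD1]) simp
next
  have "((\<lambda>h. poly (pCons 0 P) (inverse h) * exp (- inverse h)) \<longlongrightarrow> 0) (at_right 0)"
    by (rule filterlim_compose[OF tendsto_poly_times_exp_neg_at_top filterlim_inverse_at_top_right])
  moreover have "eventually (\<lambda>h. poly (pCons 0 P) (inverse h) * exp (- inverse h)
      = exp_recip_poly P h / h) (at_right (0::real))"
    using eventually_at_right_less
    by eventually_elim (simp add: exp_recip_poly_def field_simps)
  ultimately show "((\<lambda>h. exp_recip_poly P h / h) \<longlongrightarrow> 0) (at_right 0)"
    by (rule tendsto_cong[THEN iffD1, rotated])
qed

lemma exp_recip_poly_has_real_derivative:
  "(exp_recip_poly P has_real_derivative exp_recip_poly ([:0, 0, 1:] * (P - pderiv P)) x) (at x)"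
proof -
  consider "x > 0" | "x < 0" | "x = 0" by linarith
  then show ?thesis
  proof cases
    case 1
    have inv: "((\<lambda>y. 1 / y) has_real_derivative - 1 / x^2) (at x)"
      using 1 by (auto intro!: derivative_eq_intros simp: power2_eq_square)
    have "((\<lambda>y. exp (- 1 / y)) has_real_derivative exp (- 1 / x) * (1 / x^2)) (at x)"
      using 1 by (auto intro!: derivative_eq_intros simp: power2_eq_square)
    from DERIV_mult[OF DERIV_chain2[OF poly_DERIV inv] this]
    have "((\<lambda>y. poly P (1 / y) * exp (- 1 / y)) has_real_derivative
        poly (pderiv P) (1 / x) * (- 1 / x^2) * exp (- 1 / x) + exp (- 1 / x) * (1 / x^2) * poly P (1 / x)) (at x)" .
    moreover have "poly (pderiv P) (1 / x) * (- 1 / x^2) * exp (- 1 / x) + exp (- 1 / x) * (1 / x^2) * poly P (1 / x)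
        = exp_recip_poly ([:0, 0, 1:] * (P - pderiv P)) x"
      using 1 by (simp add: exp_recip_poly_def algebra_simps power2_eq_square)
    ultimately show ?thesis
      by (metis (no_types, lifting) has_field_derivative_transform_within_open[of _ _ _ "{0<..}"]
            1 open_greaterThan greaterThan_iff exp_recip_poly_def)
  next
    case 2
    have "((\<lambda>y. 0) has_real_derivative exp_recip_poly ([:0, 0, 1:] * (P - pderiv P)) x) (at x)"
      using 2 by (simp add: exp_recip_poly_def)
    then show ?thesis
      by (rule has_field_derivative_transform_within_open[of _ _ _ "{..<0}"])
         (use 2 in \<open>auto simp: exp_recip_poly_def\<close>)
  next
    case 3
    then show ?thesis
      using exp_recip_poly_over_tendsto_0[of P]
      by (simp add: has_field_derivative_iff exp_recip_poly_def)
  qed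
qed

lemma smooth_exp_recip_poly: "smooth (exp_recip_poly P)"
proof -
  have "smooth_upto n (exp_recip_poly P)" for n
    by (induction n arbitrary: P)
       (auto intro: smooth_upto_0I smooth_upto_SucI exp_recip_poly_has_real_derivative)
  then show ?thesis by (simp add: smooth_iff_smooth_upto)
qed

definition smooth_step :: "real \<Rightarrow> real" where
  "smooth_step t = exp_recip_poly 1 t / (exp_recip_poly 1 t + exp_recip_poly 1 (1 - t))"

lemma smooth_step_denominator_pos: "exp_recip_poly 1 t + exp_recip_poly 1 (1 - t) > 0"
  by (cases "t > 0") (auto simp: exp_recip_poly_def add_pos_nonneg add_nonneg_pos)

lemma smooth_smooth_step: "smooth smooth_step"
proof -
  have "smooth (\<lambda>t. exp_recip_poly 1 ((- 1) * t + 1))"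
    by (rule smooth_compose_affine[OF smooth_exp_recip_poly])
  then have "smooth (\<lambda>t. exp_recip_poly 1 t + exp_recip_poly 1 (1 - t))"
    by (simp add: smooth_add smooth_exp_recip_poly)
  then show ?thesis
    unfolding smooth_step_def[abs_def] using smooth_step_denominator_pos
    by (intro smooth_divide[OF smooth_exp_recip_poly]) (auto simp: less_le)
qed

lemma smooth_step_eq_0: "t \<le> 0 \<Longrightarrow> smooth_step t = 0"
  by (simp add: smooth_step_def exp_recip_poly_def)

lemma smooth_step_eq_1: "1 \<le> t \<Longrightarrow> smooth_step t = 1"
  using smooth_step_denominator_pos[of t] by (simp add: smooth_step_def exp_recip_poly_def)

lemma smooth_step_bounds: "0 \<le> smooth_step t" "smooth_step t \<le> 1"
  using smooth_step_denominator_pos[of t]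
  by (auto simp: smooth_step_def exp_recip_poly_def divide_simps)

section \<open>Test functions and the fundamental lemma of the calculus of variations\<close>

lemma test_fun_smooth: "test_fun \<phi> \<Longrightarrow> smooth \<phi>"
  unfolding test_fun_def smooth_def by blast

lemma test_funI: "smooth \<phi> \<Longrightarrow> (\<And>x. \<bar>x\<bar> > R \<Longrightarrow> \<phi> x = 0) \<Longrightarrow> test_fun \<phi>"
  unfolding test_fun_def smooth_def by blast

lemma test_fun_support:
  assumes "test_fun \<phi>"
  obtains R where "R \<ge> 0" "\<And>x. \<bar>x\<bar> > R \<Longrightarrow> \<phi> x = 0"
proof -
  obtain R where "\<And>x. \<bar>x\<bar> > R \<Longrightarrow> \<phi> x = 0" using assms unfolding test_fun_def by blast
  then show ?thesis by (intro that[of "\<bar>R\<bar>"]) auto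
qed

lemma test_fun_bounded:
  assumes "test_fun \<phi>"
  obtains B where "\<And>x. \<bar>\<phi> x\<bar> \<le> B"
proof -
  obtain R where R: "\<And>x. \<bar>x\<bar> > R \<Longrightarrow> \<phi> x = 0" using test_fun_support[OF assms] by blast
  obtain B where B: "B \<ge> 0" "\<And>x. x \<in> {-R..R} \<Longrightarrow> \<bar>\<phi> x\<bar> \<le> B"
    using continuous_on_compact_bound[of "{-R..R}" \<phi>] continuous_on_smooth[OF test_fun_smooth[OF assms]]
    by auto
  have "\<bar>\<phi> x\<bar> \<le> B" for x
  proof (cases "\<bar>x\<bar> > R")
    case False then have "x \<in> {-R..R}" by auto
    then show ?thesis using B(2) by blast
  qed (simp add: R B(1))
  then show ?thesis by (rule that)
qed

lemma test_fun_deriv: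
  assumes "test_fun \<phi>"
  shows "test_fun (deriv \<phi>)"
proof -
  obtain R where R: "\<And>x. \<bar>x\<bar> > R \<Longrightarrow> \<phi> x = 0" using test_fun_support[OF assms] by blast
  have "deriv \<phi> x = 0" if "\<bar>x\<bar> > R" for x
  proof -
    have "((\<lambda>y. 0) has_real_derivative 0) (at x)" by simp
    then have "(\<phi> has_real_derivative 0) (at x)"
      by (rule has_field_derivative_transform_within_open[of _ _ _ "{y. \<bar>y\<bar> > R}"])
         (use that R in \<open>auto intro!: open_Collect_less continuous_intros\<close>)
    then show ?thesis by (rule DERIV_imp_deriv)
  qed
  then show ?thesis using smooth_deriv[OF test_fun_smooth[OF assms]] by (intro test_funI) auto
qed

lemma set_integrable_const: "set_integrable lborel {a..b::real} (\<lambda>x. c :: real)"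
  using borel_integrable_atLeastAtMost'[of a b "\<lambda>x. c"] by simp

lemma borel_measurable_if_locally_integrable:
  fixes f :: "real \<Rightarrow> real"
  assumes "\<And>a b. set_integrable lborel {a..b} f"
  shows "f \<in> borel_measurable lborel"
proof (rule borel_measurable_LIMSEQ_real)
  show "(\<lambda>n. indicator {-real n..real n} x *\<^sub>R f x) \<longlonglongrightarrow> f x" for x
  proof (rule tendsto_eventually)
    obtain N :: nat where "real N \<ge> \<bar>x\<bar>" using real_arch_simple by blast
    then show "\<forall>\<^sub>F n in sequentially. indicator {-real n..real n} x *\<^sub>R f x = f x"
      unfolding eventually_sequentially by (intro exI[of _ N]) (auto simp: indicator_def)
  qed
  show "(\<lambda>x. indicator {-real n..real n} x *\<^sub>R f x) \<in> borel_measurable lborel" for n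
    using assms unfolding set_integrable_def by (rule borel_measurable_integrable)
qed

lemma integrable_mult_test_fun:
  fixes g :: "real \<Rightarrow> real"
  assumes g: "\<And>a b. set_integrable lborel {a..b} g" and \<phi>: "test_fun \<phi>"
  shows "integrable lborel (\<lambda>x. g x * \<phi> x)"
proof -
  obtain R where R: "\<And>x. \<bar>x\<bar> > R \<Longrightarrow> \<phi> x = 0" using test_fun_support[OF \<phi>] by blast
  obtain B where B: "\<And>x. \<bar>\<phi> x\<bar> \<le> B" using test_fun_bounded[OF \<phi>] by blast
  show ?thesis
  proof (rule Bochner_Integration.integrable_bound)
    show "integrable lborel (\<lambda>x. B * \<bar>indicator {-R..R} x *\<^sub>R g x\<bar>)"
      using g unfolding set_integrable_def by (intro integrable_mult_right integrable_abs)
    show "(\<lambda>x. g x * \<phi> x) \<in> borel_measurable lborel"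
      using borel_measurable_if_locally_integrable[OF g] smooth_measurable[OF test_fun_smooth[OF \<phi>]] by measurable
    have "\<bar>g x * \<phi> x\<bar> \<le> \<bar>B * \<bar>indicator {-R..R} x *\<^sub>R g x\<bar>\<bar>" for x
    proof (cases "\<bar>x\<bar> > R")
      case False then have "x \<in> {-R..R}" by auto
      then show ?thesis using B[of x] by (simp add: abs_mult mult_right_mono mult.commute)
    qed (simp add: R)
    then show "AE x in lborel. norm (g x * \<phi> x) \<le> norm (B * \<bar>indicator {-R..R} x *\<^sub>R g x\<bar>)"
      by simp
  qed
qed

lemma integrable_test_fun: "test_fun \<phi> \<Longrightarrow> integrable lborel \<phi>"
  using integrable_mult_test_fun[of "\<lambda>x. 1" \<phi>, OF set_integrable_const] by simp

definition cutoff :: "real \<Rightarrow> real \<Rightarrow> nat \<Rightarrow> real \<Rightarrow> real" where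
  "cutoff c d n x = smooth_step (real (Suc n) * (x - c)) * smooth_step (real (Suc n) * (d - x))"

lemma cutoff_eq_0: "x \<le> c \<or> d \<le> x \<Longrightarrow> cutoff c d n x = 0"
  by (auto simp: cutoff_def smooth_step_eq_0 mult_nonneg_nonpos)

lemma cutoff_bounds: "0 \<le> cutoff c d n x" "cutoff c d n x \<le> 1"
  using smooth_step_bounds[of "real (Suc n) * (x - c)"] smooth_step_bounds[of "real (Suc n) * (d - x)"]
  by (auto simp: cutoff_def intro: mult_le_one)

lemma test_fun_cutoff: "test_fun (cutoff c d n)"
proof (rule test_funI[where R="\<bar>c\<bar> + \<bar>d\<bar>"])
  have "smooth (\<lambda>x. smooth_step (real (Suc n) * x + (- real (Suc n) * c))
      * smooth_step ((- real (Suc n)) * x + real (Suc n) * d))"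
    by (intro smooth_mult smooth_compose_affine smooth_smooth_step)
  then show "smooth (cutoff c d n)"
    by (simp add: cutoff_def[abs_def] algebra_simps)
qed (intro cutoff_eq_0, arith)

lemma cutoff_tendsto_indicator: "(\<lambda>n. cutoff c d n x) \<longlonglongrightarrow> indicator {c<..<d} x"
proof (cases "c < x \<and> x < d")
  case True
  obtain N :: nat where N: "real N > 1 / (x - c) + 1 / (d - x)" using reals_Archimedean2 by blast
  have "cutoff c d n x = 1" if "n \<ge> N" for n
  proof -
    have "real N \<le> real n" using that by simp
    moreover have "1 / (x - c) > 0" "1 / (d - x) > 0" using True by auto
    ultimately have "real (Suc n) \<ge> 1 / (x - c)" "real (Suc n) \<ge> 1 / (d - x)"
      using N unfolding of_nat_Suc by linarith+
    then have "real (Suc n) * (x - c) \<ge> 1" "real (Suc n) * (d - x) \<ge> 1"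
      using True by (auto simp: field_simps)
    then show ?thesis by (simp add: cutoff_def smooth_step_eq_1)
  qed
  then show ?thesis
    using True by (intro tendsto_eventually) (auto simp: eventually_sequentially)
qed (auto simp: cutoff_eq_0)

lemma AE_zero_if_tail_integrals_zero:
  fixes g :: "real \<Rightarrow> real"
  assumes g: "integrable lborel g" and tails: "\<And>x. (\<integral>y. g y * indicator {x<..} y \<partial>lborel) = 0"
  shows "AE x in lborel. g x = 0"
proof -
  have [measurable]: "g \<in> borel_measurable lborel" using g by auto
  define M where "M = density lborel (\<lambda>y. ennreal (g y))"
  define N where "N = density lborel (\<lambda>y. ennreal (- g y))"
  have tail: "emeasure (density lborel (\<lambda>y. ennreal (h y))) {x<..}
      = ennreal (\<integral>y. max 0 (h y) * indicator {x<..} y \<partial>lborel)"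
    if h: "integrable lborel h" for h :: "real \<Rightarrow> real" and x
  proof -
    have [measurable]: "h \<in> borel_measurable lborel" using h by auto
    have "emeasure (density lborel (\<lambda>y. ennreal (h y))) {x<..}
        = (\<integral>\<^sup>+y. ennreal (max 0 (h y) * indicator {x<..} y) \<partial>lborel)"
      by (subst emeasure_density) (auto intro!: nn_integral_cong simp: indicator_def max_def ennreal_neg)
    also have "\<dots> = ennreal (\<integral>y. max 0 (h y) * indicator {x<..} y \<partial>lborel)"
      using h by (intro nn_integral_eq_integral integrable_real_mult_indicator integrable_max) auto
    finally show ?thesis .
  qed
  have parts_eq: "(\<integral>y. max 0 (g y) * indicator {x<..} y \<partial>lborel)
      = (\<integral>y. max 0 (- g y) * indicator {x<..} y \<partial>lborel)" for x
  proof -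
    have "integrable lborel (\<lambda>y. max 0 (g y) * indicator {x<..} y)"
      "integrable lborel (\<lambda>y. max 0 (- g y) * indicator {x<..} y)"
      using g by (auto intro!: integrable_real_mult_indicator integrable_max)
    then have "(\<integral>y. max 0 (g y) * indicator {x<..} y \<partial>lborel) - (\<integral>y. max 0 (- g y) * indicator {x<..} y \<partial>lborel)
        = (\<integral>y. max 0 (g y) * indicator {x<..} y - max 0 (- g y) * indicator {x<..} y \<partial>lborel)"
      by simp
    also have "\<dots> = (\<integral>y. g y * indicator {x<..} y \<partial>lborel)"
      by (intro Bochner_Integration.integral_cong) (auto simp: max_def)
    finally show ?thesis using tails by simp
  qed
  have "M = N"
  proof (rule measure_eqI_lessThan)
    show "sets M = sets borel" "sets N = sets borel" unfolding M_def N_def by auto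
    show "emeasure M {x<..} < \<infinity>" for x using tail[OF g] unfolding M_def by simp
    show "emeasure M {x<..} = emeasure N {x<..}" for x
      using tail[OF g] tail[of "\<lambda>y. - g y"] g parts_eq unfolding M_def N_def by simp
  qed
  then have "AE x in lborel. ennreal (g x) = ennreal (- g x)"
    unfolding M_def N_def by (intro sigma_finite_measure.density_unique[OF sigma_finite_lborel]) auto
  then show ?thesis
  proof eventually_elim
    case (elim x)
    then show "g x = 0"
      using ennreal_eq_0_iff[of "g x"] ennreal_eq_0_iff[of "- g x"] by (cases "g x \<ge> 0") auto
  qed
qed

lemma integral_indicator_eq_0_if_orthogonal_to_test_funs:
  fixes f :: "real \<Rightarrow> real"
  assumes loc: "\<And>a b. set_integrable lborel {a..b} f"
    and orth: "\<And>\<phi>. test_fun \<phi> \<Longrightarrow> (\<integral>x. f x * \<phi> x \<partial>lborel) = 0"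
  shows "(\<integral>x. f x * indicator {c<..<d} x \<partial>lborel) = 0"
proof -
  have [measurable]: "f \<in> borel_measurable lborel" by (rule borel_measurable_if_locally_integrable[OF loc])
  have "(\<lambda>n. \<integral>x. f x * cutoff c d n x \<partial>lborel) \<longlonglongrightarrow> (\<integral>x. f x * indicator {c<..<d} x \<partial>lborel)"
  proof (rule integral_dominated_convergence[where w="\<lambda>x. \<bar>indicator {c..d} x *\<^sub>R f x\<bar>"])
    show "(\<lambda>x. f x * cutoff c d n x) \<in> borel_measurable lborel" for n
      using smooth_measurable[OF test_fun_smooth[OF test_fun_cutoff]] by measurable
    show "integrable lborel (\<lambda>x. \<bar>indicator {c..d} x *\<^sub>R f x\<bar>)"
      using loc[of c d] unfolding set_integrable_def by (rule integrable_abs)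
    show "AE x in lborel. (\<lambda>n. f x * cutoff c d n x) \<longlonglongrightarrow> f x * indicator {c<..<d} x"
      by (intro AE_I2 tendsto_mult tendsto_const cutoff_tendsto_indicator)
    have "\<bar>f x * cutoff c d n x\<bar> \<le> \<bar>indicator {c..d} x *\<^sub>R f x\<bar>" for x n
    proof (cases "c \<le> x \<and> x \<le> d")
      case True
      have "\<bar>f x\<bar> * \<bar>cutoff c d n x\<bar> \<le> \<bar>f x\<bar> * 1"
        using cutoff_bounds[of c d n x] by (intro mult_left_mono) auto
      then show ?thesis using True by (simp add: abs_mult)
    next
      case False
      then have "x \<le> c \<or> d \<le> x" by auto
      then show ?thesis by (simp add: cutoff_eq_0)
    qed
    then show "AE x in lborel. norm (f x * cutoff c d n x) \<le> \<bar>indicator {c..d} x *\<^sub>R f x\<bar>" for n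
      by simp
  qed measurable
  moreover have "(\<lambda>n. \<integral>x. f x * cutoff c d n x \<partial>lborel) = (\<lambda>n. 0)"
    using orth[OF test_fun_cutoff] by simp
  ultimately show ?thesis using LIMSEQ_unique tendsto_const by metis
qed

lemma AE_zero_if_orthogonal_to_test_funs:
  fixes f :: "real \<Rightarrow> real"
  assumes loc: "\<And>a b. set_integrable lborel {a..b} f"
    and orth: "\<And>\<phi>. test_fun \<phi> \<Longrightarrow> (\<integral>x. f x * \<phi> x \<partial>lborel) = 0"
  shows "AE x in lborel. f x = 0"
proof -
  note interval = integral_indicator_eq_0_if_orthogonal_to_test_funs[OF loc orth]
  have "AE x in lborel. x \<in> {-real n<..<real n} \<longrightarrow> f x = 0" for n
  proof -
    define g where "g x = f x * indicator {-real n<..<real n} x" for x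
    have "set_integrable lborel {-real n<..<real n} f"
      by (rule set_integrable_subset[OF loc[of "-real n" "real n"]]) auto
    then have "integrable lborel g" unfolding set_integrable_def g_def by (simp add: mult.commute)
    moreover have "(\<integral>y. g y * indicator {x<..} y \<partial>lborel) = 0" for x
    proof -
      have "(\<integral>y. g y * indicator {x<..} y \<partial>lborel)
          = (\<integral>y. f y * indicator {max x (-real n)<..<real n} y \<partial>lborel)"
        by (intro Bochner_Integration.integral_cong) (auto simp: g_def indicator_def)
      then show ?thesis using interval by simp
    qed
    ultimately have "AE x in lborel. g x = 0" by (rule AE_zero_if_tail_integrals_zero)
    then show ?thesis by eventually_elim (auto simp: g_def)
  qed
  then have "AE x in lborel. \<forall>n. x \<in> {-real n<..<real n} \<longrightarrow> f x = 0"
    by (subst AE_all_countable) blast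
  then show ?thesis
  proof eventually_elim
    case (elim x)
    obtain n :: nat where "real n > \<bar>x\<bar>" using reals_Archimedean2 by blast
    then show "f x = 0" using elim[THEN spec, of n] by auto
  qed
qed

lemma weak_deriv_unique_AE:
  assumes "weak_deriv w v1" "weak_deriv w v2"
  shows "AE x in lborel. v1 x = v2 x"
proof -
  have loc: "\<And>a b. set_integrable lborel {a..b} v1" "\<And>a b. set_integrable lborel {a..b} v2"
    using assms unfolding weak_deriv_def by auto
  have "AE x in lborel. v1 x - v2 x = 0"
  proof (rule AE_zero_if_orthogonal_to_test_funs)
    show "set_integrable lborel {a..b} (\<lambda>x. v1 x - v2 x)" for a b
      using loc by (rule set_integral_diff)
    fix \<phi> assume \<phi>: "test_fun \<phi>"
    have "(\<integral>x. w x * deriv \<phi> x \<partial>lborel) = - (\<integral>x. v1 x * \<phi> x \<partial>lborel)"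
      "(\<integral>x. w x * deriv \<phi> x \<partial>lborel) = - (\<integral>x. v2 x * \<phi> x \<partial>lborel)"
      using assms \<phi> unfolding weak_deriv_def by blast+
    then have "(\<integral>x. v1 x * \<phi> x \<partial>lborel) = (\<integral>x. v2 x * \<phi> x \<partial>lborel)" by linarith
    then show "(\<integral>x. (v1 x - v2 x) * \<phi> x \<partial>lborel) = 0"
      using integrable_mult_test_fun[OF loc(1) \<phi>] integrable_mult_test_fun[OF loc(2) \<phi>]
      by (simp add: left_diff_distrib)
  qed
  then show ?thesis by eventually_elim simp
qed

lemma test_fun_lincomb:
  assumes "test_fun \<phi>" "test_fun \<psi>"
  shows "test_fun (\<lambda>x. a * \<phi> x + b * \<psi> x)"
proof -
  obtain R1 where R1: "R1 \<ge> 0" "\<And>x. \<bar>x\<bar> > R1 \<Longrightarrow> \<phi> x = 0" using test_fun_support[OF assms(1)] by blast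
  obtain R2 where R2: "R2 \<ge> 0" "\<And>x. \<bar>x\<bar> > R2 \<Longrightarrow> \<psi> x = 0" using test_fun_support[OF assms(2)] by blast
  show ?thesis
    using R1 R2 test_fun_smooth[OF assms(1)] test_fun_smooth[OF assms(2)]
    by (intro test_funI[where R="R1 + R2"] smooth_add smooth_cmult) auto
qed

lemma test_fun_antiderivative:
  assumes \<psi>: "test_fun \<psi>" and "(\<integral>x. \<psi> x \<partial>lborel) = 0"
  obtains \<Phi> where "test_fun \<Phi>" "\<And>x. deriv \<Phi> x = \<psi> x"
proof -
  obtain R where R: "R \<ge> 0" "\<And>x. \<bar>x\<bar> > R \<Longrightarrow> \<psi> x = 0" using test_fun_support[OF \<psi>] by blast
  have cont: "continuous_on S \<psi>" for S by (rule continuous_on_smooth[OF test_fun_smooth[OF \<psi>]])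
  define \<Phi> where "\<Phi> x = integral {-R-1..x} \<psi>" for x
  have \<Phi>_left: "\<Phi> x = 0" if "x < -R" for x
  proof -
    have "integral {-R-1..x} \<psi> = integral {-R-1..x} (\<lambda>x. 0)"
      by (rule integral_cong) (use that R in auto)
    then show ?thesis by (simp add: \<Phi>_def)
  qed
  have \<Phi>_right: "\<Phi> x = 0" if "x > R" for x
  proof -
    have "\<Phi> x = (LINT y:{-R-1..x}|lborel. \<psi> y)"
      unfolding \<Phi>_def by (rule set_borel_integral_eq_integral(2)[symmetric])
        (rule borel_integrable_atLeastAtMost'[OF cont])
    also have "\<dots> = (\<integral>y. \<psi> y \<partial>lborel)"
    proof -
      have "indicator {-R-1..x} y *\<^sub>R \<psi> y = \<psi> y" for y
        using that R(2)[of y] by (cases "\<bar>y\<bar> > R") (auto simp: indicator_def not_less abs_le_iff)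
      then show ?thesis
        unfolding set_lebesgue_integral_def by (intro Bochner_Integration.integral_cong refl)
    qed
    finally show ?thesis using assms(2) by simp
  qed
  have \<Phi>_deriv: "(\<Phi> has_real_derivative \<psi> x) (at x)" for x
  proof (cases "x > -R - 1")
    case True
    have "(\<Phi> has_real_derivative \<psi> x) (at x within {-R-1..x+1})"
      unfolding \<Phi>_def by (rule integral_has_real_derivative[OF cont]) (use True in auto)
    moreover have "at x within {-R-1..x+1} = at x"
      by (rule at_within_interior) (use True in auto)
    ultimately show ?thesis by simp
  next
    case False
    have "((\<lambda>y. 0) has_real_derivative \<psi> x) (at x)" using R(2)[of x] False by simp
    then show ?thesis
      by (rule has_field_derivative_transform_within_open[of _ _ _ "{..<-R}"])
         (use False R(1) \<Phi>_left in auto)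
  qed
  show ?thesis
  proof (rule that)
    show "test_fun \<Phi>"
    proof (rule test_funI[where R=R])
      show "smooth \<Phi>" by (rule smoothI[OF \<Phi>_deriv test_fun_smooth[OF \<psi>]])
      show "\<Phi> x = 0" if "\<bar>x\<bar> > R" for x
        using that \<Phi>_left \<Phi>_right by (cases "x > R") auto
    qed
    show "deriv \<Phi> x = \<psi> x" for x using \<Phi>_deriv DERIV_imp_deriv by blast
  qed
qed

lemma integral_cutoff_ge_1: "1 \<le> (\<integral>x. cutoff 0 3 0 x \<partial>lborel)"
proof -
  have "(\<integral>x. indicator {1..2::real} x \<partial>lborel) \<le> (\<integral>x. cutoff 0 3 0 x \<partial>lborel)"
  proof (rule integral_mono)
    show "integrable lborel (cutoff 0 3 0)" by (rule integrable_test_fun[OF test_fun_cutoff])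
    show "indicator {1..2} x \<le> cutoff 0 3 0 x" for x :: real
    proof (cases "x \<in> {1..2}")
      case True then show ?thesis by (simp add: cutoff_def smooth_step_eq_1)
    qed (simp add: cutoff_bounds)
  qed simp
  then show ?thesis by simp
qed

lemma du_Bois_Reymond:
  fixes g :: "real \<Rightarrow> real"
  assumes loc: "\<And>a b. set_integrable lborel {a..b} g"
    and orth: "\<And>\<phi>. test_fun \<phi> \<Longrightarrow> (\<integral>x. g x * deriv \<phi> x \<partial>lborel) = 0"
  shows "\<exists>C. AE x in lborel. g x = C"
proof -
  define \<phi>0 where "\<phi>0 x = 1 / (\<integral>x. cutoff 0 3 0 x \<partial>lborel) * cutoff 0 3 0 x" for x
  have \<phi>0: "test_fun \<phi>0"
    using test_fun_lincomb[OF test_fun_cutoff[of 0 3 0] test_fun_cutoff[of 0 3 0],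
        where a="1 / (\<integral>x. cutoff 0 3 0 x \<partial>lborel)" and b=0]
    by (simp add: \<phi>0_def[abs_def])
  have int_\<phi>0: "(\<integral>x. \<phi>0 x \<partial>lborel) = 1"
    using integral_cutoff_ge_1 by (simp add: \<phi>0_def)
  define C where "C = (\<integral>x. g x * \<phi>0 x \<partial>lborel)"
  have "AE x in lborel. g x - C = 0"
  proof (rule AE_zero_if_orthogonal_to_test_funs)
    show "set_integrable lborel {a..b} (\<lambda>x. g x - C)" for a b
      using loc set_integrable_const by (rule set_integral_diff)
    fix \<psi> assume \<psi>: "test_fun \<psi>"
    define k where "k = (\<integral>x. \<psi> x \<partial>lborel)"
    \<comment> \<open>Subtracting k \<phi>0 leaves a test function of integral zero, hence the derivative of a test function.\<close>
    have \<chi>: "test_fun (\<lambda>x. 1 * \<psi> x + (- k) * \<phi>0 x)" by (intro test_fun_lincomb \<psi> \<phi>0)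
    have "(\<integral>x. 1 * \<psi> x + (- k) * \<phi>0 x \<partial>lborel) = 0"
      using integrable_test_fun[OF \<psi>] integrable_test_fun[OF \<phi>0] int_\<phi>0 by (simp add: k_def)
    then obtain \<Phi> where \<Phi>: "test_fun \<Phi>" "\<And>x. deriv \<Phi> x = 1 * \<psi> x + (- k) * \<phi>0 x"
      using test_fun_antiderivative[OF \<chi>] by blast
    have i\<psi>: "integrable lborel (\<lambda>x. g x * \<psi> x)" by (rule integrable_mult_test_fun[OF loc \<psi>])
    have i\<phi>0: "integrable lborel (\<lambda>x. g x * \<phi>0 x)" by (rule integrable_mult_test_fun[OF loc \<phi>0])
    have "0 = (\<integral>x. g x * (1 * \<psi> x + (- k) * \<phi>0 x) \<partial>lborel)" using orth[OF \<Phi>(1)] \<Phi>(2) by simp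
    also have "\<dots> = (\<integral>x. g x * \<psi> x - k * (g x * \<phi>0 x) \<partial>lborel)"
      by (simp add: ring_distribs mult.left_commute)
    also have "\<dots> = (\<integral>x. g x * \<psi> x \<partial>lborel) - k * C"
      using i\<psi> i\<phi>0 by (simp add: C_def)
    finally have "(\<integral>x. g x * \<psi> x \<partial>lborel) = k * C" by simp
    moreover have "(\<integral>x. (g x - C) * \<psi> x \<partial>lborel) = (\<integral>x. g x * \<psi> x \<partial>lborel) - C * k"
      using i\<psi> integrable_test_fun[OF \<psi>] by (simp add: k_def left_diff_distrib)
    ultimately show "(\<integral>x. (g x - C) * \<psi> x \<partial>lborel) = 0" by simp
  qed
  then have "AE x in lborel. g x = C" by eventually_elim simp
  then show ?thesis ..
qed

section \<open>Absolutely continuous representatives\<close>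

text \<open>primitive F f: F is absolutely continuous with derivative f almost everywhere.\<close>

definition primitive :: "(real \<Rightarrow> real) \<Rightarrow> (real \<Rightarrow> real) \<Rightarrow> bool" where
  "primitive F f \<longleftrightarrow> (\<forall>a b. set_integrable lborel {a..b} f)
     \<and> (\<forall>x y. x \<le> y \<longrightarrow> F y - F x = (LINT t:{x..y}|lborel. f t))"

lemma primitive_set_integrable: "primitive F f \<Longrightarrow> set_integrable lborel {a..b} f"
  unfolding primitive_def by blast

lemma primitive_diff_eq: "primitive F f \<Longrightarrow> x \<le> y \<Longrightarrow> F y - F x = (LINT t:{x..y}|lborel. f t)"
  unfolding primitive_def by blast

lemma set_integral_split:
  fixes f :: "real \<Rightarrow> real"
  assumes "a \<le> c" "c \<le> b" and f: "set_integrable lborel {a..b} f"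
  shows "(LINT x:{a..b}|lborel. f x) = (LINT x:{a..c}|lborel. f x) + (LINT x:{c..b}|lborel. f x)"
proof -
  have "(LINT x:{a..c} \<union> {c..b}|lborel. f x) = (LINT x:{a..c}|lborel. f x) + (LINT x:{c..b}|lborel. f x)"
  proof (rule set_integral_Un_AE)
    show "AE x in lborel. \<not> (x \<in> {a..c} \<and> x \<in> {c..b})"
      using AE_lborel_singleton[of c] by eventually_elim auto
  qed (use assms in \<open>auto intro: set_integrable_subset[OF f]\<close>)
  moreover have "{a..b} = {a..c} \<union> {c..b}" using assms by auto
  ultimately show ?thesis by simp
qed

lemma continuous_on_primitive:
  assumes F: "primitive F f"
  shows "continuous_on S F"
proof -
  have "continuous_on {a..b} F" if "a \<le> b" for a b
  proof -
    have f: "set_integrable lborel {a..b} f" by (rule primitive_set_integrable[OF F])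
    have "continuous_on {a..b} (\<lambda>x. F a + integral {a..x} f)"
      by (intro continuous_intros indefinite_integral_continuous_1 set_borel_integral_eq_integral(1)[OF f])
    moreover have "F a + integral {a..x} f = F x" if "x \<in> {a..b}" for x
      using primitive_diff_eq[OF F, of a x] set_borel_integral_eq_integral(2)[OF primitive_set_integrable[OF F]]
        that by simp
    ultimately show ?thesis by (rule continuous_on_eq)
  qed
  then have "isCont F x" for x
    by (intro continuous_on_interior[of "{x-1..x+1}"]) auto
  then show ?thesis using continuous_at_imp_continuous_on by blast
qed

lemma primitive_measurable: "primitive F f \<Longrightarrow> F \<in> borel_measurable lborel"
  using continuous_on_primitive[of F f UNIV] borel_measurable_continuous_onI by simp

lemma set_integrable_continuous: "continuous_on UNIV f \<Longrightarrow> set_integrable lborel {a..b} (f :: real \<Rightarrow> real)"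
  by (rule borel_integrable_atLeastAtMost') (auto intro: continuous_on_subset)

lemma primitive_add:
  assumes "primitive F f" "primitive G g"
  shows "primitive (\<lambda>x. F x + G x) (\<lambda>x. f x + g x)"
  unfolding primitive_def
proof (intro conjI allI impI)
  note int = primitive_set_integrable[OF assms(1)] primitive_set_integrable[OF assms(2)]
  show "set_integrable lborel {a..b} (\<lambda>x. f x + g x)" for a b using int by (rule set_integral_add)
  fix x y :: real assume "x \<le> y"
  then show "F y + G y - (F x + G x) = (LINT t:{x..y}|lborel. f t + g t)"
    using primitive_diff_eq[OF assms(1) \<open>x \<le> y\<close>] primitive_diff_eq[OF assms(2) \<open>x \<le> y\<close>]
      set_integral_add(2)[OF int] add_diff_add by metis
qed

lemma primitive_add_const: "primitive F f \<Longrightarrow> primitive (\<lambda>x. F x + C) f"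
  unfolding primitive_def by simp

lemma primitive_if_has_real_derivative:
  assumes F': "\<And>x. (F has_real_derivative f x) (at x)" and f: "continuous_on UNIV f"
  shows "primitive F f"
  unfolding primitive_def
proof (intro conjI allI impI)
  show "set_integrable lborel {a..b} f" for a b by (rule set_integrable_continuous[OF f])
  fix x y :: real assume "x \<le> y"
  have "(LINT t:{x..y}|lborel. f t) = F y - F x"
    unfolding set_lebesgue_integral_def
  proof (rule integral_FTC_atLeastAtMost[OF \<open>x \<le> y\<close>])
    show "(F has_vector_derivative f t) (at t within {x..y})" for t
      using F'[of t] by (auto simp: has_real_derivative_iff_has_vector_derivative intro: has_vector_derivative_at_within)
    show "continuous_on {x..y} f" using f by (rule continuous_on_subset) auto
  qed
  then show "F y - F x = (LINT t:{x..y}|lborel. f t)" by simp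
qed

lemma primitive_cong_AE:
  assumes F: "primitive F f" and [measurable]: "f \<in> borel_measurable lborel" "g \<in> borel_measurable lborel"
    and fg: "AE x in lborel. f x = g x"
  shows "primitive F g"
  unfolding primitive_def
proof (intro conjI allI impI)
  fix a b :: real
  have "set_integrable lborel {a..b} f = set_integrable lborel {a..b} g"
    by (rule set_integrable_cong_AE) (use fg in auto)
  then show "set_integrable lborel {a..b} g" using primitive_set_integrable[OF F] by simp
  assume "a \<le> b"
  have "(LINT t:{a..b}|lborel. f t) = (LINT t:{a..b}|lborel. g t)"
    by (rule set_lebesgue_integral_cong_AE) (use fg in auto)
  then show "F b - F a = (LINT t:{a..b}|lborel. g t)" using primitive_diff_eq[OF F \<open>a \<le> b\<close>] by simp
qed

text \<open>Both integrals equal the integral of a(s) b(t) over the triangle x \<le> t \<le> s \<le> y.\<close>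

lemma primitive_triangle_Fubini:
  assumes A: "primitive A a" and B: "primitive B b" and "x \<le> y"
  shows "set_integrable lborel {x..y} (\<lambda>s. a s * (B s - B x))"
    and "set_integrable lborel {x..y} (\<lambda>t. b t * (A y - A t))"
    and "(LINT s:{x..y}|lborel. a s * (B s - B x)) = (LINT t:{x..y}|lborel. b t * (A y - A t))"
proof -
  define F where "F s = indicator {x..y} s * a s" for s
  define G where "G t = indicator {x..y} t * b t" for t
  have Fi: "integrable lborel F" and Gi: "integrable lborel G"
    using primitive_set_integrable[OF A, of x y] primitive_set_integrable[OF B, of x y]
    unfolding set_integrable_def F_def G_def by simp_all
  then have [measurable]: "F \<in> borel_measurable lborel" "G \<in> borel_measurable lborel" by auto
  define k where "k s t = (if t \<le> s then F s * G t else 0)" for s t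
  have "integrable (lborel \<Otimes>\<^sub>M lborel) (\<lambda>(s, t). F s * G t)"
    using Fi Gi by (intro lborel_pair.Fubini_integrable) (auto simp: abs_mult integrable_abs)
  then have k: "integrable (lborel \<Otimes>\<^sub>M lborel) (case_prod k)"
  proof (rule Bochner_Integration.integrable_bound)
    show "case_prod k \<in> borel_measurable (lborel \<Otimes>\<^sub>M lborel)" unfolding k_def by measurable
  qed (auto simp: k_def)
  have inner1: "(\<integral>t. k s t \<partial>lborel) = indicator {x..y} s * (a s * (B s - B x))" for s
  proof (cases "s \<in> {x..y}")
    case True
    have "(\<integral>t. k s t \<partial>lborel) = F s * (LINT t:{x..s}|lborel. b t)"
      unfolding set_lebesgue_integral_def integral_mult_right_zero[symmetric]
      using True by (intro Bochner_Integration.integral_cong) (auto simp: k_def G_def indicator_def)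
    then show ?thesis using primitive_diff_eq[OF B, of x s] True by (simp add: F_def)
  next
    case False
    then have "F s = 0" by (simp add: F_def)
    then have "(\<lambda>t. k s t) = (\<lambda>t. 0)" by (auto simp: k_def)
    then show ?thesis using False by (simp del: mult_eq_0_iff)
  qed
  have inner2: "(\<integral>s. k s t \<partial>lborel) = indicator {x..y} t * (b t * (A y - A t))" for t
  proof (cases "t \<in> {x..y}")
    case True
    have "(\<integral>s. k s t \<partial>lborel) = G t * (LINT s:{t..y}|lborel. a s)"
      unfolding set_lebesgue_integral_def integral_mult_right_zero[symmetric]
      using True by (intro Bochner_Integration.integral_cong) (auto simp: k_def F_def indicator_def)
    then show ?thesis using primitive_diff_eq[OF A, of t y] True by (simp add: G_def)
  next
    case False
    then have "G t = 0" by (simp add: G_def)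
    then have "(\<lambda>s. k s t) = (\<lambda>s. 0)" by (auto simp: k_def)
    then show ?thesis using False by (simp del: mult_eq_0_iff)
  qed
  show "set_integrable lborel {x..y} (\<lambda>s. a s * (B s - B x))"
    using lborel_pair.integrable_fst[OF k] inner1 unfolding set_integrable_def by simp
  show "set_integrable lborel {x..y} (\<lambda>t. b t * (A y - A t))"
    using lborel_pair.integrable_snd[OF k] inner2 unfolding set_integrable_def by simp
  show "(LINT s:{x..y}|lborel. a s * (B s - B x)) = (LINT t:{x..y}|lborel. b t * (A y - A t))"
    using lborel_pair.Fubini_integral[OF k] inner1 inner2 unfolding set_lebesgue_integral_def by simp
qed

lemma primitive_mult:
  assumes A: "primitive A a" and B: "primitive B b"
  shows "primitive (\<lambda>t. A t * B t) (\<lambda>t. a t * B t + A t * b t)"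
proof -
  have *: "set_integrable lborel {x..y} (\<lambda>t. a t * B t + A t * b t)
      \<and> A y * B y - A x * B x = (LINT t:{x..y}|lborel. a t * B t + A t * b t)" if "x \<le> y" for x y
  proof -
    note T = primitive_triangle_Fubini[OF A B that]
    have ia: "set_integrable lborel {x..y} a" and ib: "set_integrable lborel {x..y} b"
      using A B by (simp_all add: primitive_set_integrable)
    have split: "a t * B t + A t * b t
        = (a t * (B t - B x) + B x * a t) + (A y * b t - b t * (A y - A t))" for t
      by (simp add: algebra_simps)
    have int: "set_integrable lborel {x..y} (\<lambda>t. (a t * (B t - B x) + B x * a t) + (A y * b t - b t * (A y - A t)))"
      using T ia ib by (intro set_integral_add set_integral_diff set_integrable_mult_right) auto
    have "(LINT t:{x..y}|lborel. (a t * (B t - B x) + B x * a t) + (A y * b t - b t * (A y - A t)))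
        = ((LINT t:{x..y}|lborel. a t * (B t - B x)) + B x * (LINT t:{x..y}|lborel. a t))
          + (A y * (LINT t:{x..y}|lborel. b t) - (LINT t:{x..y}|lborel. b t * (A y - A t)))"
      using T ia ib
      by (simp only: set_integral_add set_integral_diff set_integral_mult_right set_integrable_mult_right)
    also have "\<dots> = A y * B y - A x * B x"
      unfolding T(3) primitive_diff_eq[OF A that, symmetric] primitive_diff_eq[OF B that, symmetric]
      by (simp add: algebra_simps)
    finally show ?thesis using int unfolding split by simp
  qed
  show ?thesis
    unfolding primitive_def
  proof (intro conjI allI impI)
    show "set_integrable lborel {x..y} (\<lambda>t. a t * B t + A t * b t)" for x y
      using * by (cases "x \<le> y") (auto simp: set_integrable_def)
  qed (use * in blast)
qed

lemma integrable_tendsto_at_top_eq_0: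
  fixes F :: "real \<Rightarrow> real"
  assumes F: "integrable lborel F" and lim: "(F \<longlongrightarrow> L) at_top"
  shows "L = 0"
proof (rule ccontr)
  assume "L \<noteq> 0"
  then have "\<forall>\<^sub>F x in at_top. dist (F x) L < \<bar>L\<bar> / 2" using lim by (intro tendstoD) auto
  then obtain R where R: "\<And>x. x \<ge> R \<Longrightarrow> \<bar>F x - L\<bar> < \<bar>L\<bar> / 2"
    by (auto simp: eventually_at_top_linorder dist_real_def)
  define T where "T = (\<integral>x. \<bar>F x\<bar> \<partial>lborel)"
  obtain n :: nat where n: "real n > T / (\<bar>L\<bar> / 2)" using reals_Archimedean2 by blast
  have "(\<integral>x. indicator {R..R + real n} x *\<^sub>R (\<bar>L\<bar> / 2) \<partial>lborel) \<le> T"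
    unfolding T_def
  proof (rule integral_mono)
    show "integrable lborel (\<lambda>x. indicator {R..R + real n} x *\<^sub>R (\<bar>L\<bar> / 2))"
      using set_integrable_const unfolding set_integrable_def by blast
    show "indicator {R..R + real n} x *\<^sub>R (\<bar>L\<bar> / 2) \<le> \<bar>F x\<bar>" for x
    proof (cases "x \<in> {R..R + real n}")
      case True
      then have "\<bar>F x - L\<bar> < \<bar>L\<bar> / 2" using R by simp
      then show ?thesis using True by (auto simp: abs_if split: if_splits)
    qed simp
  qed (use F in simp)
  then have "real n * (\<bar>L\<bar> / 2) \<le> T" by (simp add: integral_scaleR_left)
  with n \<open>L \<noteq> 0\<close> show False by (simp add: field_simps)
qed

lemma tendsto_integral_indicator_at_top:
  fixes f :: "real \<Rightarrow> real" and S :: "real \<Rightarrow> real set"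
  assumes f: "integrable lborel f" and [measurable]: "\<And>R. S R \<in> sets lborel" "S' \<in> sets lborel"
    and lim: "\<And>t. \<forall>\<^sub>F R in at_top. indicator (S R) t = (indicator S' t :: real)"
  shows "((\<lambda>R. \<integral>t. indicator (S R) t *\<^sub>R f t \<partial>lborel) \<longlongrightarrow> (\<integral>t. indicator S' t *\<^sub>R f t \<partial>lborel)) at_top"
proof (rule integral_dominated_convergence_at_top[where w="\<lambda>t. \<bar>f t\<bar>" and M=lborel
    and s="\<lambda>R t. indicator (S R) t *\<^sub>R f t" and f="\<lambda>t. indicator S' t *\<^sub>R f t"])
  have [measurable]: "f \<in> borel_measurable lborel" using f by auto
  show "(\<lambda>t. indicator S' t *\<^sub>R f t) \<in> borel_measurable lborel"
    "(\<lambda>t. indicator (S R) t *\<^sub>R f t) \<in> borel_measurable lborel" for R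
    by measurable
  show "integrable lborel (\<lambda>t. \<bar>f t\<bar>)" using f by (rule integrable_abs)
  show "AE t in lborel. ((\<lambda>R. indicator (S R) t *\<^sub>R f t) \<longlongrightarrow> indicator S' t *\<^sub>R f t) at_top"
  proof (intro AE_I2 tendsto_eventually)
    fix t show "\<forall>\<^sub>F R in at_top. indicator (S R) t *\<^sub>R f t = indicator S' t *\<^sub>R f t"
      using lim[of t] by eventually_elim simp
  qed
  show "\<forall>\<^sub>F R in at_top. AE t in lborel. norm (indicator (S R) t *\<^sub>R f t) \<le> \<bar>f t\<bar>"
    by (intro always_eventually allI AE_I2) (auto simp: indicator_def)
qed

lemma primitive_tendsto_at_top:
  assumes F: "primitive F f" and "integrable lborel f" "integrable lborel F"
  shows "(F \<longlongrightarrow> 0) at_top"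
proof -
  have "((\<lambda>R. F 0 + (\<integral>t. indicator {0..R} t *\<^sub>R f t \<partial>lborel))
      \<longlongrightarrow> F 0 + (\<integral>t. indicator {0..} t *\<^sub>R f t \<partial>lborel)) at_top"
  proof (intro tendsto_intros tendsto_integral_indicator_at_top)
    show "\<forall>\<^sub>F R in at_top. indicator {0..R} t = (indicator {0..} t :: real)" for t :: real
      using eventually_ge_at_top[of t] by eventually_elim (auto simp: indicator_def)
  qed (use assms(2) in auto)
  moreover have "\<forall>\<^sub>F R in at_top. F 0 + (\<integral>t. indicator {0..R} t *\<^sub>R f t \<partial>lborel) = F R"
    using eventually_ge_at_top[of 0]
  proof eventually_elim
    case (elim R)
    then show ?case using primitive_diff_eq[OF F elim] by (simp add: set_lebesgue_integral_def)
  qed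
  ultimately have "(F \<longlongrightarrow> F 0 + (\<integral>t. indicator {0..} t *\<^sub>R f t \<partial>lborel)) at_top"
    by (rule tendsto_cong[THEN iffD1, rotated])
  with integrable_tendsto_at_top_eq_0[OF assms(3)] show ?thesis by metis
qed

lemma primitive_tendsto_at_bot:
  assumes F: "primitive F f" and "integrable lborel f" "integrable lborel F"
  shows "((\<lambda>R. F (- R)) \<longlongrightarrow> 0) at_top"
proof -
  have "((\<lambda>R. F 0 - (\<integral>t. indicator {-R..0} t *\<^sub>R f t \<partial>lborel))
      \<longlongrightarrow> F 0 - (\<integral>t. indicator {..0} t *\<^sub>R f t \<partial>lborel)) at_top"
  proof (intro tendsto_intros tendsto_integral_indicator_at_top)
    show "\<forall>\<^sub>F R in at_top. indicator {-R..0} t = (indicator {..0} t :: real)" for t :: real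
      using eventually_ge_at_top[of "-t"] by eventually_elim (auto simp: indicator_def)
  qed (use assms(2) in auto)
  moreover have "\<forall>\<^sub>F R in at_top. F 0 - (\<integral>t. indicator {-R..0} t *\<^sub>R f t \<partial>lborel) = F (- R)"
    using eventually_ge_at_top[of 0]
  proof eventually_elim
    case (elim R)
    then have "- R \<le> 0" by simp
    then show ?case using primitive_diff_eq[OF F \<open>- R \<le> 0\<close>] by (simp add: set_lebesgue_integral_def)
  qed
  ultimately have "((\<lambda>R. F (- R)) \<longlongrightarrow> F 0 - (\<integral>t. indicator {..0} t *\<^sub>R f t \<partial>lborel)) at_top"
    by (rule tendsto_cong[THEN iffD1, rotated])
  moreover have "integrable lborel (\<lambda>x. F (- x))"
    using lborel_integrable_real_affine[OF assms(3), of "-1" 0] by simp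
  ultimately show ?thesis using integrable_tendsto_at_top_eq_0 by metis
qed

text \<open>F has limits at both ends because f is integrable, and they vanish because F is integrable.\<close>

lemma integral_primitive_eq_0:
  assumes F: "primitive F f" and f: "integrable lborel f" and "integrable lborel F"
  shows "(\<integral>x. f x \<partial>lborel) = 0"
proof -
  have "((\<lambda>R. \<integral>t. indicator {-R..R} t *\<^sub>R f t \<partial>lborel) \<longlongrightarrow> (\<integral>t. indicator UNIV t *\<^sub>R f t \<partial>lborel)) at_top"
  proof (rule tendsto_integral_indicator_at_top[OF f])
    show "\<forall>\<^sub>F R in at_top. indicator {-R..R} t = (indicator UNIV t :: real)" for t :: real
      using eventually_ge_at_top[of "\<bar>t\<bar>"] by eventually_elim (auto simp: indicator_def)
  qed auto
  moreover have "\<forall>\<^sub>F R in at_top. (\<integral>t. indicator {-R..R} t *\<^sub>R f t \<partial>lborel) = F R - F (- R)"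
    using eventually_ge_at_top[of 0]
    by eventually_elim (use primitive_diff_eq[OF F] in \<open>simp add: set_lebesgue_integral_def\<close>)
  ultimately have "((\<lambda>R. F R - F (- R)) \<longlongrightarrow> (\<integral>t. f t \<partial>lborel)) at_top"
    by (simp add: tendsto_cong)
  moreover have "((\<lambda>R. F R - F (- R)) \<longlongrightarrow> 0 - 0) at_top"
    using primitive_tendsto_at_top[OF assms] primitive_tendsto_at_bot[OF assms] by (rule tendsto_diff)
  ultimately have "(\<integral>t. f t \<partial>lborel) = 0 - 0" by (rule tendsto_unique[rotated]) simp
  then show ?thesis by simp
qed

lemma weak_deriv_primitive:
  assumes F: "primitive F f"
  shows "weak_deriv F f"
  unfolding weak_deriv_def
proof (intro conjI allI impI)
  have F_loc: "set_integrable lborel {a..b} F" for a b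
    by (rule set_integrable_continuous[OF continuous_on_primitive[OF F]])
  show "set_integrable lborel {a..b} F" "set_integrable lborel {a..b} f" for a b
    by (rule F_loc primitive_set_integrable[OF F])+
  fix \<phi> assume \<phi>: "test_fun \<phi>"
  have "primitive \<phi> (deriv \<phi>)"
    using test_fun_smooth[OF \<phi>]
    by (intro primitive_if_has_real_derivative smooth_has_real_derivative continuous_on_smooth smooth_deriv)
  then have "primitive (\<lambda>x. F x * \<phi> x) (\<lambda>x. f x * \<phi> x + F x * deriv \<phi> x)"
    by (rule primitive_mult[OF F])
  moreover have "integrable lborel (\<lambda>x. f x * \<phi> x)"
    by (rule integrable_mult_test_fun[OF primitive_set_integrable[OF F] \<phi>])
  moreover have "integrable lborel (\<lambda>x. F x * deriv \<phi> x)"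
    by (rule integrable_mult_test_fun[OF F_loc test_fun_deriv[OF \<phi>]])
  moreover have "integrable lborel (\<lambda>x. F x * \<phi> x)"
    by (rule integrable_mult_test_fun[OF F_loc \<phi>])
  ultimately have "(\<integral>x. f x * \<phi> x + F x * deriv \<phi> x \<partial>lborel) = 0"
    by (intro integral_primitive_eq_0[where F="\<lambda>x. F x * \<phi> x"] Bochner_Integration.integrable_add)
  with \<open>integrable lborel (\<lambda>x. f x * \<phi> x)\<close> \<open>integrable lborel (\<lambda>x. F x * deriv \<phi> x)\<close>
  show "(\<integral>x. F x * deriv \<phi> x \<partial>lborel) = - (\<integral>x. f x * \<phi> x \<partial>lborel)"
    by simp
qed

lemma weak_deriv_imp_primitive_AE:
  assumes uv: "weak_deriv u v"
  obtains U where "primitive U v" "AE x in lborel. u x = U x"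
proof -
  have v_loc: "\<And>a b. set_integrable lborel {a..b} v" and u_loc: "\<And>a b. set_integrable lborel {a..b} u"
    using uv unfolding weak_deriv_def by auto
  define U0 where
    "U0 x = (if 0 \<le> x then (LINT t:{0..x}|lborel. v t) else - (LINT t:{x..0}|lborel. v t))" for x
  have U0: "primitive U0 v"
    unfolding primitive_def
  proof (intro conjI allI impI v_loc)
    fix x y :: real assume "x \<le> y"
    then consider "0 \<le> x" | "y < 0" | "x < 0" "0 \<le> y" by linarith
    then show "U0 y - U0 x = (LINT t:{x..y}|lborel. v t)"
    proof cases
      case 1 then show ?thesis
        using \<open>x \<le> y\<close> set_integral_split[OF _ \<open>x \<le> y\<close> v_loc, of 0] by (simp add: U0_def)
    next
      case 2 then show ?thesis
        using \<open>x \<le> y\<close> set_integral_split[OF \<open>x \<le> y\<close> _ v_loc, of 0] by (simp add: U0_def)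
    next
      case 3 then show ?thesis using set_integral_split[OF _ _ v_loc, of x 0 y] by (simp add: U0_def)
    qed
  qed
  have U0_loc: "set_integrable lborel {a..b} U0" for a b
    by (rule set_integrable_continuous[OF continuous_on_primitive[OF U0]])
  have "\<exists>C. AE x in lborel. u x - U0 x = C"
  proof (rule du_Bois_Reymond)
    show "set_integrable lborel {a..b} (\<lambda>x. u x - U0 x)" for a b
      using u_loc U0_loc by (rule set_integral_diff)
    fix \<phi> assume \<phi>: "test_fun \<phi>"
    have "(\<integral>x. u x * deriv \<phi> x \<partial>lborel) = (\<integral>x. U0 x * deriv \<phi> x \<partial>lborel)"
      using uv weak_deriv_primitive[OF U0] \<phi> unfolding weak_deriv_def by simp
    then show "(\<integral>x. (u x - U0 x) * deriv \<phi> x \<partial>lborel) = 0"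
      using integrable_mult_test_fun[OF u_loc test_fun_deriv[OF \<phi>]]
        integrable_mult_test_fun[OF U0_loc test_fun_deriv[OF \<phi>]]
      by (simp add: left_diff_distrib)
  qed
  then obtain C where "AE x in lborel. u x - U0 x = C" by blast
  then have "AE x in lborel. u x = U0 x + C" by eventually_elim simp
  with primitive_add_const[OF U0] show ?thesis by (rule that)
qed

lemma weak_deriv_cong_AE:
  assumes uv: "weak_deriv u v" and [measurable]: "w \<in> borel_measurable lborel"
    and uw: "AE x in lborel. u x = w x"
  shows "weak_deriv w v"
proof -
  have u_loc: "\<And>a b. set_integrable lborel {a..b} u" using uv unfolding weak_deriv_def by blast
  have [measurable]: "u \<in> borel_measurable lborel" by (rule borel_measurable_if_locally_integrable[OF u_loc])
  have "set_integrable lborel {a..b} u = set_integrable lborel {a..b} w" for a b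
  proof (rule set_integrable_cong_AE)
    show "AE x\<in>{a..b} in lborel. u x = w x" using uw by eventually_elim simp
  qed measurable
  then have "set_integrable lborel {a..b} w" for a b using u_loc by blast
  moreover have "(\<integral>x. w x * deriv \<phi> x \<partial>lborel) = (\<integral>x. u x * deriv \<phi> x \<partial>lborel)" if "test_fun \<phi>" for \<phi>
  proof (rule integral_cong_AE)
    have [measurable]: "deriv \<phi> \<in> borel_measurable lborel"
      by (rule smooth_measurable[OF smooth_deriv[OF test_fun_smooth[OF that]]])
    show "(\<lambda>x. w x * deriv \<phi> x) \<in> borel_measurable lborel" by measurable
    show "(\<lambda>x. u x * deriv \<phi> x) \<in> borel_measurable lborel" by measurable
    show "AE x in lborel. w x * deriv \<phi> x = u x * deriv \<phi> x" using uw by eventually_elim simp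
  qed
  ultimately show ?thesis using uv unfolding weak_deriv_def by simp
qed

section \<open>Square-integrable functions and the kink\<close>

lemma L2_measurable: "L2 f \<Longrightarrow> f \<in> borel_measurable lborel"
  by (simp add: L2_def)

lemma integrable_mult_bounded:
  fixes f c :: "real \<Rightarrow> real"
  assumes f: "integrable lborel f" and [measurable]: "c \<in> borel_measurable lborel" and B: "\<And>x. \<bar>c x\<bar> \<le> B"
  shows "integrable lborel (\<lambda>x. c x * f x)"
proof (rule Bochner_Integration.integrable_bound[where f="\<lambda>x. B * \<bar>f x\<bar>"])
  show "integrable lborel (\<lambda>x. B * \<bar>f x\<bar>)" using f by (intro integrable_mult_right integrable_abs)
  show "(\<lambda>x. c x * f x) \<in> borel_measurable lborel" using f by measurable
  have "\<bar>c x\<bar> * \<bar>f x\<bar> \<le> \<bar>B * \<bar>f x\<bar>\<bar>" for x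
    using mult_right_mono[OF order_trans[OF B[of x] abs_ge_self] abs_ge_zero[of "f x"]] by (simp add: abs_mult)
  then show "AE x in lborel. norm (c x * f x) \<le> norm (B * \<bar>f x\<bar>)" by (simp add: abs_mult)
qed

lemma L2_integrable_mult:
  fixes f g :: "real \<Rightarrow> real"
  assumes "L2 f" "L2 g"
  shows "integrable lborel (\<lambda>x. f x * g x)"
proof (rule Bochner_Integration.integrable_bound[where f="\<lambda>x. (f x)^2 + (g x)^2"])
  show "integrable lborel (\<lambda>x. (f x)^2 + (g x)^2)" using assms by (simp add: L2_def)
  show "(\<lambda>x. f x * g x) \<in> borel_measurable lborel"
    using assms unfolding L2_def by (intro borel_measurable_times) auto
  have "\<bar>f x * g x\<bar> \<le> (f x)^2 + (g x)^2" for x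
  proof -
    have "2 * (\<bar>f x\<bar> * \<bar>g x\<bar>) \<le> (f x)^2 + (g x)^2"
      using sum_squares_bound[of "\<bar>f x\<bar>" "\<bar>g x\<bar>"] by (simp add: power2_eq_square mult.assoc)
    moreover have "0 \<le> \<bar>f x\<bar> * \<bar>g x\<bar>" by simp
    ultimately show ?thesis unfolding abs_mult by linarith
  qed
  then show "AE x in lborel. norm (f x * g x) \<le> norm ((f x)^2 + (g x)^2)" by simp
qed

lemma L2_add:
  assumes "L2 f" "L2 g"
  shows "L2 (\<lambda>x. f x + g x)"
proof -
  have "integrable lborel (\<lambda>x. (f x)^2 + (g x)^2 + 2 * (f x * g x))"
    using assms L2_integrable_mult[OF assms] by (simp add: L2_def)
  moreover have "(\<lambda>x. f x + g x) \<in> borel_measurable lborel"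
    using assms unfolding L2_def by (intro borel_measurable_add) auto
  ultimately show ?thesis by (simp add: L2_def power2_sum mult.assoc)
qed

lemma L2_mult_bounded:
  assumes f: "L2 f" and [measurable]: "c \<in> borel_measurable lborel" and B: "\<And>x. \<bar>c x\<bar> \<le> B"
  shows "L2 (\<lambda>x. c x * f x)"
proof -
  have "\<bar>(c x)^2\<bar> \<le> B^2" for x
  proof -
    have "\<bar>c x\<bar> \<le> \<bar>B\<bar>" using B[of x] by linarith
    then show ?thesis by (simp add: abs_le_square_iff)
  qed
  then have "integrable lborel (\<lambda>x. (c x)^2 * (f x)^2)"
    using f by (intro integrable_mult_bounded) (auto simp: L2_def)
  moreover have "(\<lambda>x. c x * f x) \<in> borel_measurable lborel" using L2_measurable[OF f] by measurable
  ultimately show ?thesis by (simp add: L2_def power_mult_distrib)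
qed

lemma L2_cong_AE:
  assumes f: "L2 f" and [measurable]: "g \<in> borel_measurable lborel" and fg: "AE x in lborel. f x = g x"
  shows "L2 g"
proof -
  have [measurable]: "f \<in> borel_measurable lborel" using f by (rule L2_measurable)
  have "AE x in lborel. (f x)^2 = (g x)^2" using fg by eventually_elim simp
  then have "integrable lborel (\<lambda>x. (f x)^2) = integrable lborel (\<lambda>x. (g x)^2)"
    by (intro integrable_cong_AE) measurable
  then show ?thesis using f by (simp add: L2_def)
qed

lemma u0_has_real_derivative [derivative_intros]:
  "(u0 has_real_derivative (1 - (u0 x)^2) / sqrt 2) (at x within S)"
proof -
  have "cosh (x / sqrt 2) \<noteq> 0" using cosh_real_pos[of "x / sqrt 2"] by simp
  from has_field_derivative_tanh[OF this DERIV_cdivide[OF DERIV_ident, of "sqrt 2"]]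
  have "(u0 has_real_derivative (1 - (u0 x)^2) / sqrt 2) (at x)"
    unfolding u0_def[abs_def] by simp
  then show ?thesis by (rule has_field_derivative_at_within)
qed

lemma continuous_on_u0 [continuous_intros]: "continuous_on S u0"
proof (intro continuous_at_imp_continuous_on ballI)
  show "isCont u0 x" for x by (rule DERIV_isCont[OF u0_has_real_derivative])
qed

lemma u0_measurable [measurable]: "u0 \<in> borel_measurable lborel"
  using borel_measurable_continuous_onI[OF continuous_on_u0] by simp

lemma abs_u0_le_1: "\<bar>u0 x\<bar> \<le> 1"
  using tanh_real_bounds[of "x / sqrt 2"] by (auto simp: u0_def)

lemma u0_coefficient:
  fixes h :: "real \<Rightarrow> real"
  assumes h: "continuous_on {-1..1} h"
  obtains B where "(\<lambda>x. h (u0 x)) \<in> borel_measurable lborel" "\<And>x. \<bar>h (u0 x)\<bar> \<le> B"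
proof -
  have u0_range: "u0 x \<in> {-1..1}" for x using abs_u0_le_1[of x] by (simp add: abs_le_iff)
  have "continuous_on UNIV (\<lambda>x. h (u0 x))"
    by (rule continuous_on_compose2[OF h continuous_on_u0]) (use u0_range in blast)
  then have "(\<lambda>x. h (u0 x)) \<in> borel_measurable lborel"
    using borel_measurable_continuous_onI by simp
  moreover have "bounded (h ` {-1..1})"
    by (rule compact_imp_bounded[OF compact_continuous_image[OF h compact_Icc]])
  then obtain B where "\<And>y. y \<in> h ` {-1..1} \<Longrightarrow> norm y \<le> B" unfolding bounded_iff by blast
  then have "\<bar>h (u0 x)\<bar> \<le> B" for x using imageI[OF u0_range[of x], of h] by simp
  ultimately show ?thesis by (rule that)
qed

lemma integrable_u0_coefficient_mult:
  fixes h f :: "real \<Rightarrow> real"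
  assumes "continuous_on {-1..1} h" "integrable lborel f"
  shows "integrable lborel (\<lambda>x. h (u0 x) * f x)"
proof -
  obtain B where "(\<lambda>x. h (u0 x)) \<in> borel_measurable lborel" "\<And>x. \<bar>h (u0 x)\<bar> \<le> B"
    using u0_coefficient[OF assms(1)] by blast
  then show ?thesis by (rule integrable_mult_bounded[OF assms(2)])
qed

lemma L2_u0_coefficient_mult:
  fixes h :: "real \<Rightarrow> real"
  assumes "continuous_on {-1..1} h" "L2 f"
  shows "L2 (\<lambda>x. h (u0 x) * f x)"
proof -
  obtain B where "(\<lambda>x. h (u0 x)) \<in> borel_measurable lborel" "\<And>x. \<bar>h (u0 x)\<bar> \<le> B"
    using u0_coefficient[OF assms(1)] by blast
  then show ?thesis by (rule L2_mult_bounded[OF assms(2)])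
qed

section \<open>The identity\<close>

lemma sqrt_2_mult_sqrt_2: "sqrt 2 * (sqrt 2 * x) = 2 * (x :: real)"
  by (simp add: mult.assoc[symmetric])

lemma integral_eq_if_primitive_diff:
  assumes "primitive P (\<lambda>x. f x - g x)" "integrable lborel P" "integrable lborel f" "integrable lborel g"
  shows "(\<integral>x. f x \<partial>lborel) = (\<integral>x. g x \<partial>lborel)"
  using integral_primitive_eq_0[OF assms(1) _ assms(2)] assms(3,4) by simp

lemma w_square_identity:
  fixes s t U V :: real
  assumes "s * s = 2"
  shows "(1 - t^2) * (U * U) + s * t * (V * U + U * V) = (V + s * t * U)^2 - (V^2 + (3 * t^2 - 1) * U^2)"
proof -
  have "(V + s * t * U)^2 = V^2 + 2 * s * t * U * V + (s * s) * t^2 * U^2" by algebra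
  then show ?thesis unfolding assms by algebra
qed

lemma w_deriv_square_identity:
  fixes s t U V z :: real
  assumes "s * s = 2"
  shows "(1 - t^2) * (V * V) + s * t * (z * V + V * z)
      + ((- 2 * s * t * (1 - t^2)) * (U * V) + 2 * (1 - t^2) * (V * V + U * z)
      + ((5 - 6 * t^2) * (1 - t^2) * (U * U) + s * t * (5 - 2 * t^2) * (V * U + U * V)))
    = ((z + (1 - t^2) * U + s * t * V)^2 + 3 * (V + s * t * U)^2)
      - (z^2 + 5 * t^2 * V^2 + (- 5 * t^4 + 15 * t^2 - 4) * U^2)"
proof -
  have "(z + (1 - t^2) * U + s * t * V)^2 = z^2 + (1 - t^2)^2 * U^2 + (s * s) * t^2 * V^2
      + 2 * z * (1 - t^2) * U + 2 * s * t * z * V + 2 * s * t * (1 - t^2) * U * V"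
    "(V + s * t * U)^2 = V^2 + 2 * s * t * U * V + (s * s) * t^2 * U^2" by algebra+
  then show ?thesis unfolding assms by algebra
qed

lemma primitive_sqrt_2_u0: "primitive (\<lambda>x. sqrt 2 * u0 x) (\<lambda>x. 1 - (u0 x)^2)"
  by (rule primitive_if_has_real_derivative) (auto intro!: derivative_eq_intros continuous_intros)

lemma primitive_w_square_defect:
  assumes UV: "primitive U V"
  shows "primitive (\<lambda>x. sqrt 2 * u0 x * (U x * U x))
    (\<lambda>x. (V x + sqrt 2 * u0 x * U x)^2 - ((V x)^2 + (3 * (u0 x)^2 - 1) * (U x)^2))"
proof -
  have "primitive (\<lambda>x. sqrt 2 * u0 x * (U x * U x))
      (\<lambda>x. (1 - (u0 x)^2) * (U x * U x) + sqrt 2 * u0 x * (V x * U x + U x * V x))"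
    by (rule primitive_mult[OF primitive_sqrt_2_u0 primitive_mult[OF UV UV]])
  moreover have "(\<lambda>x. (1 - (u0 x)^2) * (U x * U x) + sqrt 2 * u0 x * (V x * U x + U x * V x))
      = (\<lambda>x. (V x + sqrt 2 * u0 x * U x)^2 - ((V x)^2 + (3 * (u0 x)^2 - 1) * (U x)^2))"
    by (intro ext w_square_identity) simp
  ultimately show ?thesis by simp
qed

lemma primitive_w_deriv_square_defect:
  assumes UV: "primitive U V" and Vz: "primitive V z"
  shows "primitive (\<lambda>x. sqrt 2 * u0 x * (V x * V x) + (2 * (1 - (u0 x)^2) * (U x * V x)
      + sqrt 2 * u0 x * (5 - 2 * (u0 x)^2) * (U x * U x)))
    (\<lambda>x. ((z x + (1 - (u0 x)^2) * U x + sqrt 2 * u0 x * V x)^2 + 3 * (V x + sqrt 2 * u0 x * U x)^2)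
      - ((z x)^2 + 5 * (u0 x)^2 * (V x)^2 + (- 5 * (u0 x)^4 + 15 * (u0 x)^2 - 4) * (U x)^2))"
proof -
  have c2: "primitive (\<lambda>x. 2 * (1 - (u0 x)^2)) (\<lambda>x. - 2 * sqrt 2 * u0 x * (1 - (u0 x)^2))"
    by (rule primitive_if_has_real_derivative)
      (auto intro!: derivative_eq_intros continuous_intros simp: field_simps sqrt_2_mult_sqrt_2)
  have c3: "primitive (\<lambda>x. sqrt 2 * u0 x * (5 - 2 * (u0 x)^2)) (\<lambda>x. (5 - 6 * (u0 x)^2) * (1 - (u0 x)^2))"
    by (rule primitive_if_has_real_derivative)
      (auto intro!: derivative_eq_intros continuous_intros
        simp: field_simps sqrt_2_mult_sqrt_2 power2_eq_square power4_eq_xxxx)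
  have "primitive (\<lambda>x. sqrt 2 * u0 x * (V x * V x) + (2 * (1 - (u0 x)^2) * (U x * V x)
        + sqrt 2 * u0 x * (5 - 2 * (u0 x)^2) * (U x * U x)))
      (\<lambda>x. (1 - (u0 x)^2) * (V x * V x) + sqrt 2 * u0 x * (z x * V x + V x * z x)
        + ((- 2 * sqrt 2 * u0 x * (1 - (u0 x)^2)) * (U x * V x) + 2 * (1 - (u0 x)^2) * (V x * V x + U x * z x)
        + ((5 - 6 * (u0 x)^2) * (1 - (u0 x)^2) * (U x * U x)
          + sqrt 2 * u0 x * (5 - 2 * (u0 x)^2) * (V x * U x + U x * V x))))"
    by (intro primitive_add primitive_mult primitive_sqrt_2_u0 c2 c3 UV Vz)
  moreover have "(\<lambda>x. (1 - (u0 x)^2) * (V x * V x) + sqrt 2 * u0 x * (z x * V x + V x * z x)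
        + ((- 2 * sqrt 2 * u0 x * (1 - (u0 x)^2)) * (U x * V x) + 2 * (1 - (u0 x)^2) * (V x * V x + U x * z x)
        + ((5 - 6 * (u0 x)^2) * (1 - (u0 x)^2) * (U x * U x)
          + sqrt 2 * u0 x * (5 - 2 * (u0 x)^2) * (V x * U x + U x * V x))))
      = (\<lambda>x. ((z x + (1 - (u0 x)^2) * U x + sqrt 2 * u0 x * V x)^2 + 3 * (V x + sqrt 2 * u0 x * U x)^2)
        - ((z x)^2 + 5 * (u0 x)^2 * (V x)^2 + (- 5 * (u0 x)^4 + 15 * (u0 x)^2 - 4) * (U x)^2))"
    by (intro ext w_deriv_square_identity) simp
  ultimately show ?thesis by simp
qed

lemma integral_w_square:
  assumes UV: "primitive U V" and L2: "L2 U" "L2 V"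
  shows "(\<integral>x. (V x + sqrt 2 * u0 x * U x)^2 \<partial>lborel)
    = (\<integral>x. (V x)^2 + (3 * (u0 x)^2 - 1) * (U x)^2 \<partial>lborel)"
proof (rule integral_eq_if_primitive_diff[OF primitive_w_square_defect[OF UV]])
  show "integrable lborel (\<lambda>x. sqrt 2 * u0 x * (U x * U x))"
    using L2_integrable_mult[OF L2(1) L2(1)]
    by (rule integrable_u0_coefficient_mult[where h="\<lambda>t. sqrt 2 * t", rotated]) (intro continuous_intros)
  show "integrable lborel (\<lambda>x. (V x + sqrt 2 * u0 x * U x)^2)"
    using L2_add[OF L2(2) L2_u0_coefficient_mult[where h="\<lambda>t. sqrt 2 * t", OF _ L2(1)]]
    by (simp add: L2_def continuous_intros)
  show "integrable lborel (\<lambda>x. (V x)^2 + (3 * (u0 x)^2 - 1) * (U x)^2)"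
    using L2 integrable_u0_coefficient_mult[where h="\<lambda>t. 3 * t^2 - 1" and f="\<lambda>x. (U x)^2"]
    by (simp add: L2_def continuous_intros)
qed

lemma integral_w_deriv_square:
  assumes UV: "primitive U V" and Vz: "primitive V z" and L2: "L2 U" "L2 V" "L2 z"
  shows "(\<integral>x. (z x + (1 - (u0 x)^2) * U x + sqrt 2 * u0 x * V x)^2 \<partial>lborel)
      + 3 * (\<integral>x. (V x + sqrt 2 * u0 x * U x)^2 \<partial>lborel)
    = (\<integral>x. (z x)^2 + 5 * (u0 x)^2 * (V x)^2 + (- 5 * (u0 x)^4 + 15 * (u0 x)^2 - 4) * (U x)^2 \<partial>lborel)"
proof -
  let ?W = "\<lambda>x. V x + sqrt 2 * u0 x * U x"
  let ?W1 = "\<lambda>x. z x + (1 - (u0 x)^2) * U x + sqrt 2 * u0 x * V x"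
  have W: "L2 ?W" and W1: "L2 ?W1"
    using L2 by (intro L2_add L2_u0_coefficient_mult continuous_intros; simp)+
  have "(\<integral>x. (?W1 x)^2 + 3 * (?W x)^2 \<partial>lborel)
      = (\<integral>x. (z x)^2 + 5 * (u0 x)^2 * (V x)^2 + (- 5 * (u0 x)^4 + 15 * (u0 x)^2 - 4) * (U x)^2 \<partial>lborel)"
  proof (rule integral_eq_if_primitive_diff[OF primitive_w_deriv_square_defect[OF UV Vz]])
    show "integrable lborel (\<lambda>x. sqrt 2 * u0 x * (V x * V x) + (2 * (1 - (u0 x)^2) * (U x * V x)
          + sqrt 2 * u0 x * (5 - 2 * (u0 x)^2) * (U x * U x)))"
      using integrable_u0_coefficient_mult[where h="\<lambda>t. sqrt 2 * t", OF _ L2_integrable_mult[OF L2(2) L2(2)]]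
        integrable_u0_coefficient_mult[where h="\<lambda>t. 2 * (1 - t^2)", OF _ L2_integrable_mult[OF L2(1) L2(2)]]
        integrable_u0_coefficient_mult[where h="\<lambda>t. sqrt 2 * t * (5 - 2 * t^2)", OF _ L2_integrable_mult[OF L2(1) L2(1)]]
      by (simp add: continuous_intros)
    show "integrable lborel (\<lambda>x. (?W1 x)^2 + 3 * (?W x)^2)"
      using W W1 by (simp add: L2_def)
    show "integrable lborel (\<lambda>x. (z x)^2 + 5 * (u0 x)^2 * (V x)^2 + (- 5 * (u0 x)^4 + 15 * (u0 x)^2 - 4) * (U x)^2)"
      using L2 integrable_u0_coefficient_mult[where h="\<lambda>t. 5 * t^2" and f="\<lambda>x. (V x)^2"]
        integrable_u0_coefficient_mult[where h="\<lambda>t. - 5 * t^4 + 15 * t^2 - 4" and f="\<lambda>x. (U x)^2"]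
      by (simp add: L2_def continuous_intros)
  qed
  then show ?thesis using W W1 by (simp add: L2_def)
qed

lemma H2_primitive_representatives:
  assumes "H2 u u1 u2"
  obtains U V where "primitive U V" "primitive V u2" "L2 U" "L2 V"
    "AE x in lborel. u x = U x" "AE x in lborel. u1 x = V x"
proof -
  have L2: "L2 u" "L2 u1" "L2 u2" and weak: "weak_deriv u u1" "weak_deriv u1 u2"
    using assms unfolding H2_def by auto
  obtain U where U: "primitive U u1" "AE x in lborel. u x = U x"
    using weak_deriv_imp_primitive_AE[OF weak(1)] by blast
  obtain V where V: "primitive V u2" "AE x in lborel. u1 x = V x"
    using weak_deriv_imp_primitive_AE[OF weak(2)] by blast
  have "primitive U V"
    using U(1) L2_measurable[OF L2(2)] primitive_measurable[OF V(1)] V(2) by (rule primitive_cong_AE)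
  moreover have "L2 U" using L2(1) primitive_measurable[OF U(1)] U(2) by (rule L2_cong_AE)
  moreover have "L2 V" using L2(2) primitive_measurable[OF V(1)] V(2) by (rule L2_cong_AE)
  ultimately show ?thesis using that U(2) V(1,2) by blast
qed

lemma H1_w:
  assumes UV: "primitive U V" and Vz: "primitive V z" and L2: "L2 U" "L2 V" "L2 z"
    and [measurable]: "w \<in> borel_measurable lborel"
    and w: "AE x in lborel. w x = V x + sqrt 2 * u0 x * U x"
  shows "H1 w (\<lambda>x. z x + (1 - (u0 x)^2) * U x + sqrt 2 * u0 x * V x)"
proof -
  from primitive_add[OF Vz primitive_mult[OF primitive_sqrt_2_u0 UV]]
  have "primitive (\<lambda>x. V x + sqrt 2 * u0 x * U x) (\<lambda>x. z x + (1 - (u0 x)^2) * U x + sqrt 2 * u0 x * V x)"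
    by (simp add: add.assoc)
  then have "weak_deriv w (\<lambda>x. z x + (1 - (u0 x)^2) * U x + sqrt 2 * u0 x * V x)"
  proof (rule weak_deriv_cong_AE[OF weak_deriv_primitive])
    show "AE x in lborel. V x + sqrt 2 * u0 x * U x = w x" using w by eventually_elim simp
  qed simp
  moreover have W: "L2 (\<lambda>x. V x + sqrt 2 * u0 x * U x)"
    and "L2 (\<lambda>x. z x + (1 - (u0 x)^2) * U x + sqrt 2 * u0 x * V x)"
    using L2 by (intro L2_add L2_u0_coefficient_mult continuous_intros; simp)+
  moreover have "AE x in lborel. V x + sqrt 2 * u0 x * U x = w x" using w by eventually_elim simp
  then have "L2 w" by (rule L2_cong_AE[OF W, rotated]) simp
  ultimately show ?thesis unfolding H1_def by blast
qed

lemma integral_square_H1_deriv_unique: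
  assumes "H1 w w1" "H1 w w2"
  shows "(\<integral>x. (w1 x)^2 \<partial>lborel) = (\<integral>x. (w2 x)^2 \<partial>lborel)"
proof -
  have "L2 w1" "L2 w2" using assms unfolding H1_def by auto
  note [measurable] = L2_measurable[OF this(1)] L2_measurable[OF this(2)]
  have "AE x in lborel. w1 x = w2 x" using weak_deriv_unique_AE assms unfolding H1_def by blast
  then have "AE x in lborel. (w1 x)^2 = (w2 x)^2" by eventually_elim simp
  then show ?thesis by (intro integral_cong_AE) simp_all
qed

lemma Kplus_form_eq_primitive_representatives:
  assumes UV: "primitive U V" and Vu2: "primitive V u2"
    and L2: "L2 U" "L2 V" "L2 u2" and [measurable]: "u \<in> borel_measurable lborel" "u1 \<in> borel_measurable lborel"
    and u: "AE x in lborel. u x = U x" and u1: "AE x in lborel. u1 x = V x"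
    and [measurable]: "w \<in> borel_measurable lborel" and w: "AE x in lborel. w x = V x + sqrt 2 * u0 x * U x"
  shows "Kplus_form c u u1 u2
    = (\<integral>x. (u2 x + (1 - (u0 x)^2) * U x + sqrt 2 * u0 x * V x)^2 \<partial>lborel)
      + (3 - c) * (\<integral>x. (w x)^2 \<partial>lborel)"
proof -
  have [measurable]: "U \<in> borel_measurable lborel" "V \<in> borel_measurable lborel" "u2 \<in> borel_measurable lborel"
    using L2_measurable[OF L2(1)] L2_measurable[OF L2(2)] L2_measurable[OF L2(3)] by auto
  have "Kplus_form c u u1 u2
      = (\<integral>x. (u2 x)^2 + 5 * (u0 x)^2 * (V x)^2 + (- 5 * (u0 x)^4 + 15 * (u0 x)^2 - 4) * (U x)^2 \<partial>lborel)
        - c * (\<integral>x. (V x)^2 + (3 * (u0 x)^2 - 1) * (U x)^2 \<partial>lborel)"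
  proof -
    have "(\<integral>x. (u2 x)^2 + 5 * (u0 x)^2 * (u1 x)^2 + (- 5 * (u0 x)^4 + 15 * (u0 x)^2 - 4) * (u x)^2 \<partial>lborel)
        = (\<integral>x. (u2 x)^2 + 5 * (u0 x)^2 * (V x)^2 + (- 5 * (u0 x)^4 + 15 * (u0 x)^2 - 4) * (U x)^2 \<partial>lborel)"
    proof (rule integral_cong_AE)
      show "AE x in lborel. (u2 x)^2 + 5 * (u0 x)^2 * (u1 x)^2 + (- 5 * (u0 x)^4 + 15 * (u0 x)^2 - 4) * (u x)^2
          = (u2 x)^2 + 5 * (u0 x)^2 * (V x)^2 + (- 5 * (u0 x)^4 + 15 * (u0 x)^2 - 4) * (U x)^2"
        using u u1 by eventually_elim simp
    qed simp_all
    moreover have "(\<integral>x. (u1 x)^2 + (3 * (u0 x)^2 - 1) * (u x)^2 \<partial>lborel)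
        = (\<integral>x. (V x)^2 + (3 * (u0 x)^2 - 1) * (U x)^2 \<partial>lborel)"
    proof (rule integral_cong_AE)
      show "AE x in lborel. (u1 x)^2 + (3 * (u0 x)^2 - 1) * (u x)^2 = (V x)^2 + (3 * (u0 x)^2 - 1) * (U x)^2"
        using u u1 by eventually_elim simp
    qed simp_all
    ultimately show ?thesis unfolding Kplus_form_def by simp
  qed
  moreover have "(\<integral>x. (w x)^2 \<partial>lborel) = (\<integral>x. (V x + sqrt 2 * u0 x * U x)^2 \<partial>lborel)"
  proof (rule integral_cong_AE)
    show "AE x in lborel. (w x)^2 = (V x + sqrt 2 * u0 x * U x)^2" using w by eventually_elim simp
  qed simp_all
  ultimately show ?thesis
    using integral_w_square[OF UV L2(1,2)] integral_w_deriv_square[OF UV Vu2 L2] by (simp add: algebra_simps)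
qed

theorem corollary4p3:
  fixes c :: real and u u1 u2 :: "real \<Rightarrow> real"
  assumes "H2 u u1 u2"
  defines "w \<equiv> (\<lambda>x. u1 x + sqrt 2 * u0 x * u x)"
  shows "(\<exists>w1. H1 w w1)
       \<and> (\<forall>w1. H1 w w1 \<longrightarrow>
            Kplus_form c u u1 u2
              = (\<integral>x. (w1 x)^2 \<partial>lborel) + (3 - c) * (\<integral>x. (w x)^2 \<partial>lborel))"
proof -
  obtain U V where UV: "primitive U V" and Vu2: "primitive V u2" and L2: "L2 U" "L2 V"
    and u: "AE x in lborel. u x = U x" and u1: "AE x in lborel. u1 x = V x"
    using H2_primitive_representatives[OF assms(1)] by blast
  have L2_u: "L2 u" "L2 u1" "L2 u2" using assms(1) unfolding H2_def by auto
  note [measurable] = L2_measurable[OF L2_u(1)] L2_measurable[OF L2_u(2)]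
  have [measurable]: "w \<in> borel_measurable lborel" unfolding w_def by measurable
  have w_AE: "AE x in lborel. w x = V x + sqrt 2 * u0 x * U x"
    using u u1 by eventually_elim (simp add: w_def)
  define W1 where "W1 x = u2 x + (1 - (u0 x)^2) * U x + sqrt 2 * u0 x * V x" for x
  have H1: "H1 w W1"
    unfolding W1_def by (rule H1_w[OF UV Vu2 L2 L2_u(3) _ w_AE]) measurable
  have K: "Kplus_form c u u1 u2 = (\<integral>x. (W1 x)^2 \<partial>lborel) + (3 - c) * (\<integral>x. (w x)^2 \<partial>lborel)"
    unfolding W1_def
    by (rule Kplus_form_eq_primitive_representatives[OF UV Vu2 L2 L2_u(3) _ _ u u1 _ w_AE]; measurable)
  show ?thesis
  proof (intro conjI exI[of _ W1] H1 allI impI)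
    fix w1 assume "H1 w w1"
    then show "Kplus_form c u u1 u2 = (\<integral>x. (w1 x)^2 \<partial>lborel) + (3 - c) * (\<integral>x. (w x)^2 \<partial>lborel)"
      using K integral_square_H1_deriv_unique[OF _ H1] by simp
  qed
qed

end
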